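(* Let $\alpha>-1$ and let $\varphi(z)=\frac{az+b}{cz+d}$ be a linear fractional self-map of $\mathbb{D}$ with $\|\varphi\|_\infty=\sup_{z\in\mathbb{D}}|\varphi(z)|<1$, and let $\sigma(z)=\frac{\overline{a}z-\overline{c}}{-\overline{b}z+\overline{d}}$ be its Krein adjoint. For $w\in\mathbb{D}$ put $K^{(1)}_w(z)=\frac{(\alpha+2)z}{(1-\overline{w}z)^{\alpha+3}}$. Then, as operators on $A^2_\alpha$, $$D_\varphi^*\,T_{K^{(1)}_{\sigma(0)}}^*=T_{K^{(1)}_{\varphi(0)}}\,D_\sigma,$$ where the adjoints are taken with respect to the inner product of $A^2_\alpha$.
   Context: $\mathbb{D}$ is the open unit disk and $dA$ is normalized Lebesgue area measure on $\mathbb{D}$. For $\alpha>-1$, the weighted Bergman space $A^2_\alpha$ is the Hilbert space of analytic $f$ on $\mathbb{D}$ with $\|f\|_\alpha^2=(\alpha+1)\int_{\mathbb{D}}|f(z)|^2(1-|z|^2)^\alpha\,dA(z)<\infty$; its reproducing kernel is $K_w(z)=(1-\overline{w}z)^{-(\alpha+2)}$ and $K^{(1)}_w$ as defined satisfies $f'(w)=\langle f,K^{(1)}_w\rangle$. $D_\varphi f=f'\circ\varphi$, and for a bounded analytic $\psi$ on $\mathbb{D}$, $T_\psi f=\psi f$ is the multiplication (Toeplitz) operator. Note $\varphi(0)=b/d$ and $\sigma(0)=-\overline{c}/\overline{d}$. *)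

theory Defs
  imports "HOL-Analysis.Analysis"
begin

abbreviation unit_disk :: "complex set" where
  "unit_disk \<equiv> ball 0 1"

text \<open>Weighted Bergman space A^2_alpha (as a set of functions on the disk).
  Normalized area measure dA = (1/pi) * Lebesgue measure on the plane.\<close>
definition bergman_space :: "real \<Rightarrow> (complex \<Rightarrow> complex) set" where
  "bergman_space \<alpha> = {f. f holomorphic_on unit_disk \<and>
      set_integrable lborel unit_disk
        (\<lambda>z. (cmod (f z))\<^sup>2 * (1 - (cmod z)\<^sup>2) powr \<alpha>)}"

definition bergman_inner :: "real \<Rightarrow> (complex \<Rightarrow> complex) \<Rightarrow> (complex \<Rightarrow> complex) \<Rightarrow> complex" where
  "bergman_inner \<alpha> f g = complex_of_real ((\<alpha> + 1) / pi) *
      (LINT z : unit_disk | lborel. f z * cnj (g z) * complex_of_real ((1 - (cmod z)\<^sup>2) powr \<alpha>))"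

definition K1 :: "real \<Rightarrow> complex \<Rightarrow> complex \<Rightarrow> complex" where
  "K1 \<alpha> w z = complex_of_real (\<alpha> + 2) * z / (1 - cnj w * z) powr complex_of_real (\<alpha> + 3)"

definition lfm :: "complex \<Rightarrow> complex \<Rightarrow> complex \<Rightarrow> complex \<Rightarrow> complex \<Rightarrow> complex" where
  "lfm a b c d z = (a * z + b) / (c * z + d)"

definition Dop :: "(complex \<Rightarrow> complex) \<Rightarrow> (complex \<Rightarrow> complex) \<Rightarrow> complex \<Rightarrow> complex" where
  "Dop \<phi> f = (\<lambda>z. deriv f (\<phi> z))"

definition Tmul :: "(complex \<Rightarrow> complex) \<Rightarrow> (complex \<Rightarrow> complex) \<Rightarrow> complex \<Rightarrow> complex" where
  "Tmul \<psi> f = (\<lambda>z. \<psi> z * f z)"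

end

theory Submission
  imports Defs "HOL-Complex_Analysis.Complex_Analysis"
begin

text \<open>
  Write \<open>c\<^sub>m = (\<alpha> + 2) (\<alpha> + 3)\<^sub>m / m!\<close>, so that \<open>K1 w z = \<Sum>\<^sub>m c\<^sub>m (cnj w)\<^sup>m z\<^sup>m\<^sup>+\<^sup>1\<close>.
  Since the monomials are orthogonal for the radial weight \<open>(1 - \<bar>z\<bar>\<^sup>2)\<^sup>\<alpha>\<close>, integrating \<open>f\<close>
  against \<open>cnj z\<^sup>m\<^sup>+\<^sup>1\<close> picks out a Taylor coefficient of \<open>f'\<close>; this gives the reproducing property
  \<open>f' w = \<langle>f, K1 w\<rangle>\<close> and the expansion \<open>f' w = \<Sum>\<^sub>m c\<^sub>m A\<^sub>m w\<^sup>m\<close> with \<open>A\<^sub>m = \<langle>f, z\<^sup>m\<^sup>+\<^sup>1\<rangle>\<close>.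

  Substituting \<open>w = \<phi> z\<close> expands \<open>\<langle>K1 (\<sigma> 0) \<cdot> f' \<circ> \<phi>, g\<rangle>\<close> as \<open>\<Sum>\<^sub>m c\<^sub>m A\<^sub>m \<langle>K1 (\<sigma> 0) \<phi>\<^sup>m, g\<rangle>\<close>.
  On the other side, the factorisation
  \<open>(1 - cnj (\<phi> 0) u) (1 - \<sigma> u cnj z) = (1 - \<sigma> 0 cnj z) (1 - cnj (\<phi> z) u)\<close>
  gives \<open>K1 (\<phi> 0) u \<cdot> cnj (K1 (\<sigma> u) z) = cnj (K1 (\<sigma> 0) z) \<cdot> K1 (\<phi> z) u\<close>, so that
  \<open>K1 (\<phi> 0) u \<cdot> g' (\<sigma> u) = \<langle>g, K1 (\<sigma> 0) \<cdot> cnj (K1 (\<phi> \<cdot>) u)\<rangle>\<close>; expanding \<open>K1 (\<phi> z) u\<close> in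
  powers of \<open>u\<close> produces the same series for \<open>\<langle>f, K1 (\<phi> 0) \<cdot> g' \<circ> \<sigma>\<rangle>\<close>.
  Both \<open>\<phi>\<close> and \<open>\<sigma>\<close> map the closed disk into a disk of radius \<open>t < 1\<close>, and \<open>\<Sum>\<^sub>m c\<^sub>m t\<^sup>m < \<infinity>\<close>
  dominates all series, which are therefore integrated term by term.
\<close>

section \<open>Rotation invariance of Lebesgue measure on \<open>\<complex>\<close>\<close>

abbreviation lborel2 :: "(real \<times> real) measure" where
  "lborel2 \<equiv> lborel \<Otimes>\<^sub>M lborel"

lemma emeasure_lborel_vimage_translate:
  assumes "B \<in> sets borel"
  shows "emeasure lborel ((\<lambda>y::real. y + c) -` B) = emeasure lborel B"
proof -
  have "emeasure lborel B = emeasure (distr lborel borel ((+) c)) B"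
    by (simp add: lborel_distr_plus)
  also have "\<dots> = emeasure lborel ((+) c -` B)"
    using assms by (subst emeasure_distr) auto
  moreover have "(\<lambda>y. y + c) = (+) c" by (auto simp: fun_eq_iff)
  ultimately show ?thesis by simp
qed

lemma distr_lborel2_shear_snd: "distr lborel2 lborel2 (\<lambda>(x,y). (x, y + b*x)) = lborel2"
proof (rule measure_eqI)
  show "sets (distr lborel2 lborel2 (\<lambda>(x,y). (x, y + b*x))) = sets lborel2" by simp
  fix A assume A: "A \<in> sets (distr lborel2 lborel2 (\<lambda>(x,y). (x, y + b*x)))"
  then have A': "A \<in> sets lborel2" by simp
  have meas: "(\<lambda>(x,y). (x, y + b*x)) \<in> lborel2 \<rightarrow>\<^sub>M lborel2" by measurable
  let ?T = "(\<lambda>(x::real,y::real). (x, y + b*x))"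
  have "emeasure (distr lborel2 lborel2 ?T) A = emeasure lborel2 (?T -` A \<inter> space lborel2)"
    by (rule emeasure_distr[OF meas A'])
  also have "\<dots> = (\<integral>\<^sup>+x. emeasure lborel (Pair x -` (?T -` A \<inter> space lborel2)) \<partial>lborel)"
    by (rule lborel.emeasure_pair_measure_alt) (use meas A' in measurable)
  also have "\<dots> = (\<integral>\<^sup>+x. emeasure lborel (Pair x -` A) \<partial>lborel)"
  proof (rule nn_integral_cong)
    fix x :: real
    have "Pair x -` (?T -` A \<inter> space lborel2) = (\<lambda>y. y + b*x) -` (Pair x -` A)"
      by (auto simp: space_pair_measure)
    moreover have "Pair x -` A \<in> sets borel" using A' by (simp add: sets_Pair1)
    ultimately show "emeasure lborel (Pair x -` (?T -` A \<inter> space lborel2)) = emeasure lborel (Pair x -` A)"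
      by (simp add: emeasure_lborel_vimage_translate)
  qed
  also have "\<dots> = emeasure lborel2 A"
    by (rule lborel.emeasure_pair_measure_alt[symmetric]) (use A' in simp)
  finally show "emeasure (distr lborel2 lborel2 ?T) A = emeasure lborel2 A" .
qed

lemma distr_lborel2_swap: "distr lborel2 lborel2 (\<lambda>(x,y). (y,x)) = lborel2"
  using lborel_pair.distr_pair_swap[symmetric] by simp

lemma distr_lborel2_shear_fst: "distr lborel2 lborel2 (\<lambda>(x,y). (x + a*y, y)) = lborel2"
proof -
  let ?sw = "\<lambda>(x::real,y::real). (y,x)"
  let ?Sx = "\<lambda>(x::real,y::real). (x + a*y, y)"
  let ?Sy = "\<lambda>(x::real,y::real). (x, y + a*x)"
  have m1: "?sw \<in> lborel2 \<rightarrow>\<^sub>M lborel2" by measurable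
  have m2: "?Sx \<in> lborel2 \<rightarrow>\<^sub>M lborel2" by measurable
  have m3: "?Sy \<in> lborel2 \<rightarrow>\<^sub>M lborel2" by measurable
  have "distr lborel2 lborel2 ?Sx = distr (distr lborel2 lborel2 ?sw) lborel2 ?Sx" by (simp add: distr_lborel2_swap)
  also have "\<dots> = distr lborel2 lborel2 (?Sx \<circ> ?sw)" by (rule distr_distr[OF m2 m1])
  also have "?Sx \<circ> ?sw = ?sw \<circ> ?Sy" by (auto simp: fun_eq_iff algebra_simps)
  also have "distr lborel2 lborel2 (?sw \<circ> ?Sy) = distr (distr lborel2 lborel2 ?Sy) lborel2 ?sw"
    by (rule distr_distr[OF m1 m3, symmetric])
  also have "\<dots> = lborel2" by (simp add: distr_lborel2_shear_snd distr_lborel2_swap)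
  finally show ?thesis .
qed

lemma lborel_complex_eq_distr_Complex:
  "(lborel :: complex measure) = distr lborel2 borel (\<lambda>(x,y). Complex x y)"
proof (rule lborel_eqI)
  fix l u :: complex
  assume le: "\<And>b. b \<in> Basis \<Longrightarrow> l \<bullet> b \<le> u \<bullet> b"
  have le1: "Re l \<le> Re u" and le2: "Im l \<le> Im u"
    using le[of 1] le[of \<i>] by (auto simp: Basis_complex_def inner_complex_def)
  have "(\<lambda>(x,y). Complex x y) -` box l u \<inter> space (lborel \<Otimes>\<^sub>M lborel) =
        {Re l<..<Re u} \<times> {Im l<..<Im u}"
    by (auto simp: box_def Basis_complex_def inner_complex_def space_pair_measure)
  moreover have "(\<lambda>(x,y). Complex x y) \<in> lborel \<Otimes>\<^sub>M lborel \<rightarrow>\<^sub>M borel"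
    unfolding Complex_eq case_prod_beta by measurable
  ultimately show "emeasure (distr (lborel \<Otimes>\<^sub>M lborel) borel (\<lambda>(x,y). Complex x y)) (box l u) =
       (\<Prod>b\<in>Basis. (u - l) \<bullet> b)"
    using le1 le2
    by (simp add: emeasure_distr lborel.emeasure_pair_measure_Times Basis_complex_def
        inner_complex_def ennreal_mult)
qed simp

text \<open>A rotation is the product of the shears \<open>(x, y) \<mapsto> (x + a y, y)\<close>, \<open>(x, y) \<mapsto> (x, y + b x)\<close>,
  \<open>(x, y) \<mapsto> (x + a y, y)\<close> with \<open>a = -tan (\<theta>/2)\<close> and \<open>b = sin \<theta>\<close>, which requires \<open>sin \<theta> \<noteq> 0\<close>.\<close>
lemma distr_lborel_mult_unimodular:
  fixes e :: complex
  assumes e1: "cmod e = 1" and e2: "Im e \<noteq> 0"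
  shows "distr lborel borel (\<lambda>z. e * z) = lborel"
proof -
  define b where "b = Im e"
  define a where "a = - (1 - Re e) / Im e"
  let ?C = "\<lambda>(x::real,y::real). Complex x y"
  let ?S1 = "\<lambda>(x::real,y::real). (x + a*y, y)"
  let ?S2 = "\<lambda>(x::real,y::real). (x, y + b*x)"
  have mC: "?C \<in> lborel2 \<rightarrow>\<^sub>M borel" unfolding Complex_eq case_prod_beta by measurable
  have m1: "?S1 \<in> lborel2 \<rightarrow>\<^sub>M lborel2" by measurable
  have m2: "?S2 \<in> lborel2 \<rightarrow>\<^sub>M lborel2" by measurable
  have me: "(\<lambda>z. e * z) \<in> (borel :: complex measure) \<rightarrow>\<^sub>M borel" by measurable
  have ee: "(Re e)^2 + (Im e)^2 = 1"
    using e1 unfolding cmod_def by (simp add: power2_eq_square)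
  have key: "(\<lambda>z. e * z) \<circ> ?C = ?C \<circ> ?S1 \<circ> ?S2 \<circ> ?S1"
  proof (rule ext, clarsimp)
    fix x y :: real
    have "a * b = Re e - 1" unfolding a_def b_def using e2 by (simp add: field_simps)
    moreover have "a * (2 + a*b) = - Im e"
    proof -
      have "a * (2 + a*b) = a * (1 + Re e)" using \<open>a * b = Re e - 1\<close> by simp
      also have "\<dots> = - (1 - (Re e)^2) / Im e" unfolding a_def by (simp add: power2_eq_square algebra_simps)
      also have "\<dots> = - Im e" using ee e2 by (simp add: power2_eq_square field_simps)
      finally show ?thesis .
    qed
    ultimately have f1: "1 + a * Im e = Re e" and f2: "a * 2 + a * (a * Im e) = - Im e"
      unfolding b_def by (simp_all add: algebra_simps)
    show "e * Complex x y = Complex (x + a * y + a * (y + b * (x + a * y))) (y + b * (x + a * y))"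
      unfolding b_def complex_eq_iff
      using arg_cong[OF f1, of "\<lambda>t. x*t"] arg_cong[OF f2, of "\<lambda>t. y*t"] arg_cong[OF f1, of "\<lambda>t. y*t"]
      by (simp add: algebra_simps)
  qed
  have "distr lborel borel (\<lambda>z. e * z) = distr (distr lborel2 borel ?C) borel (\<lambda>z. e * z)"
    by (simp flip: lborel_complex_eq_distr_Complex)
  also have "\<dots> = distr lborel2 borel ((\<lambda>z. e * z) \<circ> ?C)"
    by (rule distr_distr[OF me mC])
  also have "\<dots> = distr lborel2 borel (?C \<circ> ?S1 \<circ> ?S2 \<circ> ?S1)" by (simp only: key)
  also have "\<dots> = distr (distr lborel2 lborel2 ?S1) borel (?C \<circ> ?S1 \<circ> ?S2)"
    by (rule distr_distr[symmetric]) (use mC m1 m2 in measurable)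
  also have "\<dots> = distr (distr lborel2 lborel2 ?S2) borel (?C \<circ> ?S1)"
    by (simp add: distr_lborel2_shear_fst, rule distr_distr[symmetric]) (use mC m1 m2 in measurable)
  also have "\<dots> = distr (distr lborel2 lborel2 ?S1) borel ?C"
    by (simp add: distr_lborel2_shear_snd, rule distr_distr[symmetric]) (use mC m1 m2 in measurable)
  also have "\<dots> = lborel" by (simp add: distr_lborel2_shear_fst flip: lborel_complex_eq_distr_Complex)
  finally show ?thesis .
qed

section \<open>Radial integrals over the disk\<close>

lemma emeasure_ball_complex: "r \<ge> 0 \<Longrightarrow> emeasure lborel (ball (0::complex) r) = ennreal (pi * r^2)"
  by (simp add: emeasure_ball unit_ball_vol_2)

lemma emeasure_cball_complex: "r \<ge> 0 \<Longrightarrow> emeasure lborel (cball (0::complex) r) = ennreal (pi * r^2)"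
  by (simp add: emeasure_cball unit_ball_vol_2)

lemma emeasure_unit_disk_norm_square_greater:
  "emeasure lborel ({z. x < (cmod z)^2} \<inter> unit_disk) =
   ennreal (if x < 0 then pi else if x < 1 then pi * (1 - x) else 0)"
proof (cases "x < 0")
  case True
  then have "{z. x < (cmod z)^2} \<inter> unit_disk = unit_disk"
    by auto (meson less_le_trans zero_le_power2)
  then show ?thesis using True by (simp add: emeasure_ball_complex)
next
  case False
  show ?thesis
  proof (cases "x < 1")
    case True
    have sq: "sqrt x < 1" using True False by simp
    have iff: "x < (cmod z)^2 \<longleftrightarrow> \<not> cmod z \<le> sqrt x" for z :: complex
    proof
      assume a: "x < (cmod z)^2" show "\<not> cmod z \<le> sqrt x"
      proof
        assume "cmod z \<le> sqrt x"
        then have "(cmod z)^2 \<le> (sqrt x)^2" by (intro power_mono) auto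
        then show False using a False by simp
      qed
    next
      assume "\<not> cmod z \<le> sqrt x" then have "sqrt x < cmod z" by simp
      then have "(sqrt x)^2 < (cmod z)^2" using False by (intro power_strict_mono) auto
      then show "x < (cmod z)^2" using False by simp
    qed
    have eq: "{z. x < (cmod z)^2} \<inter> unit_disk = unit_disk - cball 0 (sqrt x)"
      unfolding set_eq_iff by (simp add: iff) blast
    have "emeasure lborel (unit_disk - cball 0 (sqrt x)) =
          emeasure lborel (unit_disk) - emeasure lborel (cball (0::complex) (sqrt x))"
    proof (rule emeasure_Diff)
      show "emeasure lborel (cball (0::complex) (sqrt x)) \<noteq> \<infinity>" using False by (simp add: emeasure_cball_complex)
      show "cball 0 (sqrt x) \<subseteq> unit_disk"
      proof
        fix z :: complex assume "z \<in> cball 0 (sqrt x)"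
        then have "cmod z \<le> sqrt x" by simp
        from order.strict_trans1[OF this sq] show "z \<in> unit_disk" by simp
      qed
    qed auto
    also have "\<dots> = ennreal (pi * (1 - x))"
      using False True by (simp add: emeasure_ball_complex emeasure_cball_complex ennreal_minus[symmetric] algebra_simps)
    finally show ?thesis using True False by (simp add: eq)
  next
    case False2: False
    then have "{z. x < (cmod z)^2} \<inter> unit_disk = {}"
    proof -
      { fix z :: complex assume "cmod z < 1" "x < (cmod z)^2"
        then have "(cmod z)^2 < 1" by (simp add: power_less_one_iff)
        with False2 \<open>x < (cmod z)^2\<close> have False by simp }
      then show ?thesis by auto
    qed
    then show ?thesis using False False2 by simp
  qed
qed

lemma distr_norm_square_unit_disk:
  "distr (restrict_space lborel unit_disk) borel (\<lambda>z. (cmod z)^2) =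
   density lborel (\<lambda>t. ennreal pi * indicator {0..<1} t)"
proof (rule measure_eqI_lessThan)
  let ?M = "distr (restrict_space lborel unit_disk) borel (\<lambda>z. (cmod z)^2)"
  let ?N = "density lborel (\<lambda>t::real. ennreal pi * indicator {0..<1} t)"
  show "sets ?M = sets borel" by simp
  show "sets ?N = sets borel" by simp
  have qm: "(\<lambda>z::complex. (cmod z)^2) \<in> restrict_space lborel unit_disk \<rightarrow>\<^sub>M borel"
    by (rule measurable_restrict_space1) measurable
  have eM: "emeasure ?M {x<..} = emeasure lborel ({z. x < (cmod z)^2} \<inter> unit_disk)" for x
  proof -
    have "emeasure ?M {x<..} = emeasure (restrict_space lborel unit_disk) ((\<lambda>z. (cmod z)^2) -` {x<..} \<inter> unit_disk)"
      by (subst emeasure_distr[OF qm]) (auto simp: space_restrict_space)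
    also have "\<dots> = emeasure lborel ((\<lambda>z. (cmod z)^2) -` {x<..} \<inter> unit_disk)"
      by (subst emeasure_restrict_space) auto
    finally show ?thesis by (simp add: vimage_def Int_def)
  qed
  have eM2: "emeasure ?M {x<..} = ennreal (if x < 0 then pi else if x < 1 then pi * (1 - x) else 0)" for x
    by (simp add: eM emeasure_unit_disk_norm_square_greater)
  show "emeasure ?M {x<..} < \<infinity>" for x by (simp add: eM2)
  show "emeasure ?M {x<..} = emeasure ?N {x<..}" for x
  proof -
    have "emeasure ?N {x<..} = (\<integral>\<^sup>+t. ennreal pi * indicator ({0..<1} \<inter> {x<..}) t \<partial>lborel)"
      by (subst emeasure_density) (auto intro!: nn_integral_cong simp: indicator_def)
    also have "\<dots> = ennreal pi * emeasure lborel ({0..<1} \<inter> {x<..})"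
      by (subst nn_integral_cmult_indicator) auto
    also have "\<dots> = ennreal (if x < 0 then pi else if x < 1 then pi * (1 - x) else 0)"
    proof -
      consider "x < 0" | "0 \<le> x" "x < 1" | "1 \<le> x" by linarith
      then show ?thesis
      proof cases
        case 1
        then have "{0..<1} \<inter> {x<..} = {0..<(1::real)}" by auto
        then show ?thesis using 1 by simp
      next
        case 2
        then have "{0..<1} \<inter> {x<..} = {x<..<(1::real)}" by auto
        then show ?thesis using 2 by (simp add: ennreal_mult[symmetric])
      next
        case 3
        then have "{0..<1} \<inter> {x<..} = ({}::real set)" by auto
        then show ?thesis using 3 by simp
      qed
    qed
    finally show ?thesis by (simp add: eM2)
  qed
qed

lemma nn_integral_unit_disk_radial:
  fixes h :: "real \<Rightarrow> ennreal" assumes h[measurable]: "h \<in> borel_measurable borel"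
  shows "(\<integral>\<^sup>+z. h ((cmod z)^2) * indicator unit_disk z \<partial>lborel) =
         ennreal pi * (\<integral>\<^sup>+t. h t * indicator {0..<1} t \<partial>lborel)"
proof -
  have qm: "(\<lambda>z::complex. (cmod z)^2) \<in> restrict_space lborel unit_disk \<rightarrow>\<^sub>M borel"
    by (rule measurable_restrict_space1) measurable
  have "(\<integral>\<^sup>+z. h ((cmod z)^2) * indicator unit_disk z \<partial>lborel) =
        (\<integral>\<^sup>+z. h ((cmod z)^2) \<partial>restrict_space lborel unit_disk)"
    by (subst nn_integral_restrict_space) auto
  also have "\<dots> = (\<integral>\<^sup>+t. h t \<partial>distr (restrict_space lborel unit_disk) borel (\<lambda>z. (cmod z)^2))"
    by (rule nn_integral_distr[symmetric, OF qm]) simp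
  also have "\<dots> = (\<integral>\<^sup>+t. h t \<partial>density lborel (\<lambda>t. ennreal pi * indicator {0..<1} t))"
    by (simp add: distr_norm_square_unit_disk)
  also have "\<dots> = (\<integral>\<^sup>+t. ennreal pi * (h t * indicator {0..<1} t) \<partial>lborel)"
    by (subst nn_integral_density) (auto intro!: nn_integral_cong simp: mult_ac)
  also have "\<dots> = ennreal pi * (\<integral>\<^sup>+t. h t * indicator {0..<1} t \<partial>lborel)"
    by (rule nn_integral_cmult) simp
  finally show ?thesis .
qed

lemma nn_integral_Beta:
  fixes k :: nat and \<alpha> :: real assumes a: "\<alpha> > -1"
  shows "(\<integral>\<^sup>+t. ennreal (t^k * (1 - t) powr \<alpha>) * indicator {0..<1} t \<partial>lborel) =
         ennreal (Beta (real k + 1) (\<alpha> + 1))"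
proof -
  have hi: "((\<lambda>t. t powr (real k + 1 - 1) * (1 - t) powr (\<alpha> + 1 - 1)) has_integral Beta (real k + 1) (\<alpha> + 1)) {0..1}"
    by (rule has_integral_Beta_real) (use a in auto)
  have "(\<integral>\<^sup>+t. ennreal (t powr (real k + 1 - 1) * (1 - t) powr (\<alpha> + 1 - 1)) * indicator {0..1} t \<partial>lborel)
        = ennreal (Beta (real k + 1) (\<alpha> + 1))"
    by (rule nn_integral_has_integral_lebesgue'[OF _ hi]) auto
  moreover have "(\<integral>\<^sup>+t. ennreal (t^k * (1 - t) powr \<alpha>) * indicator {0..<1} t \<partial>lborel) =
     (\<integral>\<^sup>+t. ennreal (t powr (real k + 1 - 1) * (1 - t) powr (\<alpha> + 1 - 1)) * indicator {0..1} t \<partial>lborel)"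
  proof (rule nn_integral_cong_AE)
    have "AE t in lborel. t \<noteq> (0::real)" by (rule AE_lborel_singleton)
    moreover have "AE t in lborel. t \<noteq> (1::real)" by (rule AE_lborel_singleton)
    ultimately show "AE t in lborel. ennreal (t^k * (1 - t) powr \<alpha>) * indicator {0..<1} t =
       ennreal (t powr (real k + 1 - 1) * (1 - t) powr (\<alpha> + 1 - 1)) * indicator {0..1} t"
      by eventually_elim (auto simp: indicator_def powr_realpow)
  qed
  ultimately show ?thesis by simp
qed

lemma nn_integral_unit_disk_moment:
  fixes k :: nat and \<alpha> :: real assumes a: "\<alpha> > -1"
  shows "(\<integral>\<^sup>+z. ennreal ((cmod z)^(2*k) * (1 - (cmod z)^2) powr \<alpha>) * indicator unit_disk z \<partial>lborel) =
         ennreal (pi * Beta (real k + 1) (\<alpha> + 1))"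
proof -
  have "(\<integral>\<^sup>+z. ennreal ((cmod z)^(2*k) * (1 - (cmod z)^2) powr \<alpha>) * indicator unit_disk z \<partial>lborel) =
        (\<integral>\<^sup>+z. (\<lambda>t. ennreal (t^k * (1 - t) powr \<alpha>)) ((cmod z)^2) * indicator unit_disk z \<partial>lborel)"
    by (simp add: power_mult)
  also have "\<dots> = ennreal pi * (\<integral>\<^sup>+t. ennreal (t^k * (1 - t) powr \<alpha>) * indicator {0..<1} t \<partial>lborel)"
    by (rule nn_integral_unit_disk_radial) measurable
  also have "\<dots> = ennreal (pi * Beta (real k + 1) (\<alpha> + 1))"
    by (simp add: nn_integral_Beta[OF a] ennreal_mult')
  finally show ?thesis .
qed

section \<open>Orthogonality of monomials\<close>

lemma cis_quarter_turn:
  fixes j :: nat assumes "j > 0"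
  shows "cis (pi / (2 * real j)) ^ j = \<i>" "Im (cis (pi / (2 * real j))) \<noteq> 0"
proof -
  have eq: "real j * (pi / (2 * real j)) = pi / 2" using assms by (simp add: field_simps)
  have "cis (pi / (2 * real j)) ^ j = cis (real j * (pi / (2 * real j)))" by (rule Complex.DeMoivre)
  also have "\<dots> = cis (pi / 2)" by (simp only: eq)
  finally show "cis (pi / (2 * real j)) ^ j = \<i>" by simp
  have "0 < pi / (2 * real j)" using assms by simp
  moreover have "pi / (2 * real j) < pi" using assms pi_gt_zero
    by (simp add: divide_less_eq)
  ultimately have "sin (pi / (2 * real j)) > 0" by (intro sin_gt_zero)
  then show "Im (cis (pi / (2 * real j))) \<noteq> 0" by simp
qed

text \<open>Rotating by a unit \<open>e\<close> with \<open>e ^ n * cnj e ^ k \<noteq> 1\<close> leaves the integral unchanged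
  but multiplies the integrand by \<open>e ^ n * cnj e ^ k\<close>.\<close>
lemma integral_ball_monomials_orthogonal:
  fixes n k :: nat and r :: real and \<psi> :: "real \<Rightarrow> real"
  assumes nk: "n \<noteq> k" and [measurable]: "\<psi> \<in> borel_measurable borel"
  shows "integral\<^sup>L lborel (\<lambda>z. indicator (ball 0 r) z *\<^sub>R (z^n * cnj z ^ k * complex_of_real (\<psi> (cmod z)))) = 0"
proof -
  define G where "G = (\<lambda>z::complex. indicator (ball 0 r) z *\<^sub>R (z^n * cnj z ^ k * complex_of_real (\<psi> (cmod z))))"
  have [measurable]: "ball (0::complex) r \<in> sets borel" by simp
  have [measurable]: "(\<lambda>x::complex. x^n * cnj x ^ k) \<in> borel_measurable borel"
    by (intro borel_measurable_continuous_onI continuous_intros)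
  have [measurable]: "(\<lambda>x::complex. complex_of_real (\<psi> (cmod x))) \<in> borel_measurable borel" by measurable
  have Gm[measurable]: "G \<in> borel_measurable borel" unfolding G_def by measurable
  obtain e :: complex where e1: "cmod e = 1" and e2: "Im e \<noteq> 0" and e3: "e^n * cnj e ^ k \<noteq> 1"
  proof (cases "n > k")
    case True
    define j where "j = n - k"
    have j: "j > 0" using True by (simp add: j_def)
    let ?e = "cis (pi / (2 * real j))"
    have "?e^n * cnj ?e ^ k = ?e^j * (?e * cnj ?e)^k"
      using True by (simp add: j_def power_add[symmetric] power_mult_distrib)
    also have "?e * cnj ?e = 1" by (simp add: complex_mult_cnj cmod_def[symmetric] )
    finally have "?e^n * cnj ?e ^ k = \<i>" using cis_quarter_turn[OF j] by simp
    then show ?thesis using that[of ?e] cis_quarter_turn[OF j] by simp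
  next
    case False
    then have nk': "n < k" using nk by simp
    define j where "j = k - n"
    have j: "j > 0" using nk' by (simp add: j_def)
    let ?e = "cis (pi / (2 * real j))"
    have "?e^n * cnj ?e ^ k = cnj ?e ^ j * (?e * cnj ?e)^n"
      using nk' by (simp add: j_def power_add[symmetric] power_mult_distrib)
    also have "?e * cnj ?e = 1" by (simp add: complex_mult_cnj cmod_def[symmetric])
    also have "cnj ?e ^ j = cnj (?e ^ j)" by simp
    finally have "?e^n * cnj ?e ^ k = - \<i>" using cis_quarter_turn[OF j] by simp
    moreover have "- \<i> \<noteq> (1::complex)" by (simp add: complex_eq_iff)
    ultimately show ?thesis using that[of ?e] cis_quarter_turn[OF j] by simp
  qed
  have rot: "G (e * z) = (e^n * cnj e ^ k) * G z" for z
  proof -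
    have "cmod (e * z) = cmod z" using e1 by (simp add: norm_mult)
    then show ?thesis unfolding G_def
      by (simp add: power_mult_distrib indicator_def mult_ac)
  qed
  have me: "(\<lambda>z. e * z) \<in> (borel :: complex measure) \<rightarrow>\<^sub>M borel" by measurable
  have "integral\<^sup>L lborel G = integral\<^sup>L (distr lborel borel (\<lambda>z. e * z)) G"
    by (simp add: distr_lborel_mult_unimodular[OF e1 e2])
  also have "\<dots> = integral\<^sup>L lborel (\<lambda>z. G (e * z))"
    by (rule integral_distr) (use me in auto)
  also have "\<dots> = (e^n * cnj e ^ k) * integral\<^sup>L lborel G"
    by (simp add: rot)
  finally have "(1 - e^n * cnj e ^ k) * integral\<^sup>L lborel G = 0" by (simp add: algebra_simps)
  then show ?thesis using e3 unfolding G_def by simp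
qed

lemma lborel_measurable_indicator_continuous_on:
  fixes f :: "'a::euclidean_space \<Rightarrow> 'b::real_normed_vector"
  shows "A \<in> sets borel \<Longrightarrow> continuous_on A f \<Longrightarrow> (\<lambda>x. indicator A x *\<^sub>R f x) \<in> borel_measurable lborel"
  using borel_measurable_continuous_on_indicator[of A f] by simp

abbreviation disk_weight :: "real \<Rightarrow> complex \<Rightarrow> real" where
  "disk_weight \<alpha> z \<equiv> (1 - (cmod z)\<^sup>2) powr \<alpha>"

lemma continuous_on_disk_weight: "continuous_on unit_disk (disk_weight \<alpha>)"
proof -
  have "\<forall>z\<in>unit_disk. 1 - (cmod z)\<^sup>2 > 0"
    by (auto simp: power_less_one_iff abs_square_less_1)
  then show ?thesis by (intro continuous_on_powr continuous_intros) auto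
qed

lemma
  fixes k :: nat assumes a: "\<alpha> > -1"
  shows integrable_disk_weight_moment:
      "integrable lborel (\<lambda>z. indicator unit_disk z *\<^sub>R ((cmod z)^(2*k) * disk_weight \<alpha> z))"
    and integral_disk_weight_moment:
      "integral\<^sup>L lborel (\<lambda>z. indicator unit_disk z *\<^sub>R ((cmod z)^(2*k) * disk_weight \<alpha> z))
         = pi * Beta (real k + 1) (\<alpha> + 1)"
proof -
  have m: "(\<lambda>z. indicator unit_disk z *\<^sub>R ((cmod z)^(2*k) * disk_weight \<alpha> z)) \<in> borel_measurable lborel"
    by (rule lborel_measurable_indicator_continuous_on)
       (auto intro!: continuous_intros continuous_on_disk_weight)
  have nn: "(\<integral>\<^sup>+z. ennreal (indicator unit_disk z *\<^sub>R ((cmod z)^(2*k) * disk_weight \<alpha> z)) \<partial>lborel) =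
            ennreal (pi * Beta (real k + 1) (\<alpha> + 1))"
    by (subst nn_integral_unit_disk_moment[OF a, symmetric])
       (auto intro!: nn_integral_cong simp: indicator_def)
  have pos: "pi * Beta (real k + 1) (\<alpha> + 1) \<ge> 0"
    using a by (simp add: Beta_def)
  show "integrable lborel (\<lambda>z. indicator unit_disk z *\<^sub>R ((cmod z)^(2*k) * disk_weight \<alpha> z))"
    by (rule integrableI_nn_integral_finite[OF m _ nn]) (auto intro!: AE_I2)
  show "integral\<^sup>L lborel (\<lambda>z. indicator unit_disk z *\<^sub>R ((cmod z)^(2*k) * disk_weight \<alpha> z))
          = pi * Beta (real k + 1) (\<alpha> + 1)"
    by (subst integral_eq_nn_integral[OF m]) (use pos nn in \<open>auto intro!: AE_I2\<close>)
qed

lemma integrable_disk_weight: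
  "\<alpha> > -1 \<Longrightarrow> integrable lborel (\<lambda>z. indicator unit_disk z *\<^sub>R disk_weight \<alpha> z)"
  using integrable_disk_weight_moment[of \<alpha> 0] by simp

lemma integral_sums_dominated:
  fixes F :: "nat \<Rightarrow> 'a \<Rightarrow> 'b::{banach, second_countable_topology}" and G :: "'a \<Rightarrow> real"
  assumes meas: "\<And>m. F m \<in> borel_measurable M"
    and G: "integrable M G" and G0: "\<And>x. x \<in> space M \<Longrightarrow> G x \<ge> 0"
    and bnd: "\<And>m x. x \<in> space M \<Longrightarrow> norm (F m x) \<le> b m * G x"
    and b: "summable b" "\<And>m. b m \<ge> 0"
    and sums: "\<And>x. x \<in> space M \<Longrightarrow> (\<lambda>m. F m x) sums S x"
  shows "(\<lambda>m. integral\<^sup>L M (F m)) sums integral\<^sup>L M S"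
proof -
  define s where "s = (\<lambda>i x. \<Sum>m<i. F m x)"
  have smeas: "\<And>i. s i \<in> borel_measurable M" unfolding s_def using meas by measurable
  have lim: "\<And>x. x \<in> space M \<Longrightarrow> (\<lambda>i. s i x) \<longlonglongrightarrow> S x"
    using sums unfolding s_def sums_def by auto
  have Smeas: "S \<in> borel_measurable M"
    by (rule borel_measurable_LIMSEQ_metric[OF smeas lim])
  have wint: "integrable M (\<lambda>x. suminf b * G x)" using G by auto
  have bound: "norm (s i x) \<le> suminf b * G x" if "x \<in> space M" for i x
  proof -
    have "norm (s i x) \<le> (\<Sum>m<i. norm (F m x))" unfolding s_def by (rule norm_sum)
    also have "\<dots> \<le> (\<Sum>m<i. b m * G x)" by (intro sum_mono bnd that)
    also have "\<dots> = (\<Sum>m<i. b m) * G x" by (simp add: sum_distrib_right)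
    also have "\<dots> \<le> suminf b * G x"
      by (intro mult_right_mono sum_le_suminf b G0 that) auto
    finally show ?thesis .
  qed
  have "(\<lambda>i. integral\<^sup>L M (s i)) \<longlonglongrightarrow> integral\<^sup>L M S"
    by (rule integral_dominated_convergence[OF Smeas smeas wint])
       (auto intro!: AE_I2 lim bound)
  moreover have Fint: "integrable M (F m)" for m
    by (rule Bochner_Integration.integrable_bound[of _ "\<lambda>x. b m * G x"])
       (use G meas in \<open>auto intro!: AE_I2 intro: order.trans[OF bnd abs_ge_self]\<close>)
  moreover have "integral\<^sup>L M (s i) = (\<Sum>m<i. integral\<^sup>L M (F m))" for i
    unfolding s_def by (subst Bochner_Integration.integral_sum) (use Fint in auto)
  ultimately show ?thesis
    unfolding sums_def by simp
qed

definition bergman_integral :: "real \<Rightarrow> (complex \<Rightarrow> complex) \<Rightarrow> complex" where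
  "bergman_integral \<alpha> F =
     integral\<^sup>L lborel (\<lambda>z. indicator unit_disk z *\<^sub>R (F z * complex_of_real (disk_weight \<alpha> z)))"

lemma bergman_inner_eq_bergman_integral:
  "bergman_inner \<alpha> f g = complex_of_real ((\<alpha> + 1) / pi) * bergman_integral \<alpha> (\<lambda>z. f z * cnj (g z))"
  unfolding bergman_inner_def bergman_integral_def set_lebesgue_integral_def ..

lemma bergman_integral_cmult: "bergman_integral \<alpha> (\<lambda>z. k * F z) = k * bergman_integral \<alpha> F"
proof -
  have "(\<lambda>z. indicator unit_disk z *\<^sub>R (k * F z * complex_of_real (disk_weight \<alpha> z))) =
        (\<lambda>z. k * (indicator unit_disk z *\<^sub>R (F z * complex_of_real (disk_weight \<alpha> z))))"
    by (auto simp: fun_eq_iff indicator_def)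
  then show ?thesis unfolding bergman_integral_def by (simp only: integral_mult_right_zero)
qed

lemma cnj_bergman_integral: "cnj (bergman_integral \<alpha> F) = bergman_integral \<alpha> (\<lambda>z. cnj (F z))"
proof -
  have "(\<lambda>z. indicator unit_disk z *\<^sub>R (cnj (F z) * complex_of_real (disk_weight \<alpha> z))) =
        (\<lambda>z. cnj (indicator unit_disk z *\<^sub>R (F z * complex_of_real (disk_weight \<alpha> z))))"
    by (auto simp: fun_eq_iff indicator_def)
  then show ?thesis unfolding bergman_integral_def by (simp only: Bochner_Integration.integral_cnj)
qed

lemma bergman_integral_cong:
  "(\<And>z. z \<in> unit_disk \<Longrightarrow> F z = G z) \<Longrightarrow> bergman_integral \<alpha> F = bergman_integral \<alpha> G"
  unfolding bergman_integral_def by (intro Bochner_Integration.integral_cong) (auto simp: indicator_def)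

lemma bergman_integral_sums:
  fixes F :: "nat \<Rightarrow> complex \<Rightarrow> complex"
  assumes cont: "\<And>m. continuous_on unit_disk (F m)"
    and H0: "\<And>z. z \<in> unit_disk \<Longrightarrow> H z \<ge> 0"
    and H: "integrable lborel (\<lambda>z. indicator unit_disk z *\<^sub>R (H z * disk_weight \<alpha> z))"
    and bnd: "\<And>m z. z \<in> unit_disk \<Longrightarrow> norm (F m z) \<le> b m * H z"
    and b: "summable b" "\<And>m. b m \<ge> 0"
    and sums: "\<And>z. z \<in> unit_disk \<Longrightarrow> (\<lambda>m. F m z) sums S z"
  shows "(\<lambda>m. bergman_integral \<alpha> (F m)) sums bergman_integral \<alpha> S"
  unfolding bergman_integral_def
proof (rule integral_sums_dominated[OF _ H _ _ b])
  show "(\<lambda>z. indicator unit_disk z *\<^sub>R (F m z * complex_of_real (disk_weight \<alpha> z))) \<in> borel_measurable lborel" for m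
    by (rule lborel_measurable_indicator_continuous_on)
       (auto intro!: continuous_intros cont continuous_on_disk_weight)
  show "indicator unit_disk z *\<^sub>R (H z * disk_weight \<alpha> z) \<ge> 0" for z
    using H0[of z] by (cases "z \<in> unit_disk") auto
  show "norm (indicator unit_disk z *\<^sub>R (F m z * complex_of_real (disk_weight \<alpha> z))) \<le>
          b m * (indicator unit_disk z *\<^sub>R (H z * disk_weight \<alpha> z))" for m z
  proof (cases "z \<in> unit_disk")
    case True
    have "norm (F m z) * disk_weight \<alpha> z \<le> b m * H z * disk_weight \<alpha> z"
      by (intro mult_right_mono bnd True) auto
    then show ?thesis using True by (simp add: norm_mult mult_ac)
  qed simp
  show "(\<lambda>m. indicator unit_disk z *\<^sub>R (F m z * complex_of_real (disk_weight \<alpha> z))) sums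
          (indicator unit_disk z *\<^sub>R (S z * complex_of_real (disk_weight \<alpha> z)))" for z
  proof (cases "z \<in> unit_disk")
    case True
    from sums_mult2[OF sums[OF True], of "complex_of_real (disk_weight \<alpha> z)"]
    show ?thesis using True by simp
  qed simp
qed

lemma norm_bergman_integral_le:
  fixes F :: "complex \<Rightarrow> complex"
  assumes cont: "continuous_on unit_disk F"
    and H: "integrable lborel (\<lambda>z. indicator unit_disk z *\<^sub>R (H z * disk_weight \<alpha> z))"
    and bnd: "\<And>z. z \<in> unit_disk \<Longrightarrow> norm (F z) \<le> H z"
  shows "norm (bergman_integral \<alpha> F)
           \<le> integral\<^sup>L lborel (\<lambda>z. indicator unit_disk z *\<^sub>R (H z * disk_weight \<alpha> z))"
proof -
  have meas: "(\<lambda>z. indicator unit_disk z *\<^sub>R (F z * complex_of_real (disk_weight \<alpha> z))) \<in> borel_measurable lborel"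
    by (rule lborel_measurable_indicator_continuous_on)
       (auto intro!: continuous_intros cont continuous_on_disk_weight)
  have bnd': "norm (indicator unit_disk z *\<^sub>R (F z * complex_of_real (disk_weight \<alpha> z))) \<le>
               indicator unit_disk z *\<^sub>R (H z * disk_weight \<alpha> z)" for z
  proof (cases "z \<in> unit_disk")
    case True
    have "norm (F z) * disk_weight \<alpha> z \<le> H z * disk_weight \<alpha> z"
      by (intro mult_right_mono bnd True) auto
    then show ?thesis using True by (simp add: norm_mult)
  qed simp
  have int: "integrable lborel (\<lambda>z. indicator unit_disk z *\<^sub>R (F z * complex_of_real (disk_weight \<alpha> z)))"
    by (rule Bochner_Integration.integrable_bound[OF H meas])
       (use bnd' in \<open>intro AE_I2, metis abs_ge_self order_trans real_norm_def\<close>)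
  show ?thesis unfolding bergman_integral_def
    by (rule Bochner_Integration.integral_norm_bound_integral[OF int H]) (use bnd' in auto)
qed

lemma integrable_disk_weight_scale:
  assumes "integrable lborel (\<lambda>z. indicator unit_disk z *\<^sub>R (H z * disk_weight \<alpha> z))"
  shows "integrable lborel (\<lambda>z. indicator unit_disk z *\<^sub>R ((k * H z) * disk_weight \<alpha> z))"
    and "integral\<^sup>L lborel (\<lambda>z. indicator unit_disk z *\<^sub>R ((k * H z) * disk_weight \<alpha> z)) =
         k * integral\<^sup>L lborel (\<lambda>z. indicator unit_disk z *\<^sub>R (H z * disk_weight \<alpha> z))"
proof -
  have eq: "(\<lambda>z. indicator unit_disk z *\<^sub>R ((k * H z) * disk_weight \<alpha> z)) =
            (\<lambda>z. k * (indicator unit_disk z *\<^sub>R (H z * disk_weight \<alpha> z)))"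
    by (auto simp: fun_eq_iff)
  show "integrable lborel (\<lambda>z. indicator unit_disk z *\<^sub>R ((k * H z) * disk_weight \<alpha> z))"
    unfolding eq using assms by simp
  show "integral\<^sup>L lborel (\<lambda>z. indicator unit_disk z *\<^sub>R ((k * H z) * disk_weight \<alpha> z)) =
         k * integral\<^sup>L lborel (\<lambda>z. indicator unit_disk z *\<^sub>R (H z * disk_weight \<alpha> z))"
    unfolding eq by simp
qed

section \<open>Moments of holomorphic functions\<close>

lemma integral_ball_tendsto_integral_unit_disk:
  fixes F :: "complex \<Rightarrow> 'b::{banach, second_countable_topology}"
  assumes F: "integrable lborel (\<lambda>z. indicator unit_disk z *\<^sub>R F z)"
    and r: "r \<longlonglongrightarrow> 1" "\<And>j. r j \<le> 1"
  shows "(\<lambda>j. integral\<^sup>L lborel (\<lambda>z. indicator (ball 0 (r j)) z *\<^sub>R F z))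
           \<longlonglongrightarrow> integral\<^sup>L lborel (\<lambda>z. indicator unit_disk z *\<^sub>R F z)"
proof -
  let ?F = "\<lambda>z. indicator unit_disk z *\<^sub>R F z"
  have eq: "indicator (ball 0 (r j)) z *\<^sub>R F z = indicator (ball 0 (r j)) z *\<^sub>R ?F z" for j z
    using r(2)[of j] by (auto simp: indicator_def)
  have lim: "(\<lambda>j. indicator (ball 0 (r j)) z :: real) \<longlonglongrightarrow> indicator unit_disk z" for z :: complex
  proof (cases "z \<in> unit_disk")
    case True
    then have "eventually (\<lambda>j. cmod z < r j) sequentially"
      using order_tendstoD(1)[OF r(1)] by simp
    then have "eventually (\<lambda>j. indicator (ball 0 (r j)) z = (indicator unit_disk z :: real)) sequentially"
      by eventually_elim (use True in simp)
    then show ?thesis by (rule tendsto_eventually)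
  next
    case False
    then have "indicator (ball 0 (r j)) z = (0::real)" for j
      using r(2)[of j] by (auto simp: indicator_def)
    then show ?thesis using False by simp
  qed
  have Fm: "?F \<in> borel_measurable lborel" using F by (rule borel_measurable_integrable)
  show ?thesis
    unfolding eq
  proof (rule integral_dominated_convergence[where w = "\<lambda>z. norm (?F z)"])
    show "?F \<in> borel_measurable lborel" by (fact Fm)
    show "(\<lambda>z. indicator (ball 0 (r j)) z *\<^sub>R ?F z) \<in> borel_measurable lborel" for j
      by (intro borel_measurable_scaleR borel_measurable_indicator Fm) auto
    show "integrable lborel (\<lambda>z. norm (?F z))" using F by (rule integrable_norm)
    show "AE z in lborel. (\<lambda>j. indicator (ball 0 (r j)) z *\<^sub>R ?F z) \<longlonglongrightarrow> ?F z"
    proof (intro AE_I2)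
      fix z :: complex
      have eq: "indicator unit_disk z *\<^sub>R ?F z = ?F z" by (cases "z \<in> unit_disk") simp_all
      from tendsto_scaleR[OF lim[of z] tendsto_const[of "?F z"]]
      show "(\<lambda>j. indicator (ball 0 (r j)) z *\<^sub>R ?F z) \<longlonglongrightarrow> ?F z"
        by (simp only: eq)
    qed
    show "AE z in lborel. norm (indicator (ball 0 (r j)) z *\<^sub>R ?F z) \<le> norm (?F z)" for j
      by (intro AE_I2) (auto simp: indicator_def)
  qed
qed

text \<open>Expand \<open>g\<close> in its Taylor series, which converges uniformly on the ball; by
  orthogonality only the \<open>k\<close>-th term survives.\<close>
lemma integral_ball_holomorphic_radial_moment:
  fixes g :: "complex \<Rightarrow> complex" and \<psi> :: "real \<Rightarrow> real" and k :: nat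
  assumes hol: "g holomorphic_on unit_disk" and r: "0 \<le> r" "r < 1"
    and [measurable]: "\<psi> \<in> borel_measurable borel"
    and \<psi>: "integrable lborel (\<lambda>z. indicator (ball 0 r) z *\<^sub>R \<psi> (cmod z))"
  shows "integral\<^sup>L lborel (\<lambda>z. indicator (ball 0 r) z *\<^sub>R (g z * cnj z ^ k * complex_of_real (\<psi> (cmod z))))
       = (deriv^^k) g 0 / fact k *
         complex_of_real (integral\<^sup>L lborel (\<lambda>z. indicator (ball 0 r) z *\<^sub>R ((cmod z)^(2*k) * \<psi> (cmod z))))"
proof -
  define a where "a = (\<lambda>n. (deriv^^n) g 0 / fact n)"
  define F where "F = (\<lambda>n z. indicator (ball 0 r) z *\<^sub>R (a n * (z^n * cnj z ^ k * complex_of_real (\<psi> (cmod z)))))"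
  have [measurable]: "ball (0::complex) r \<in> sets borel" by simp
  have [measurable]: "(\<lambda>z::complex. z^n * cnj z ^ k) \<in> borel_measurable borel" for n
    by (intro borel_measurable_continuous_onI continuous_intros)
  have measF: "F n \<in> borel_measurable lborel" for n
    unfolding F_def by measurable
  have taylor: "(\<lambda>n. a n * z^n) sums g z" if "z \<in> unit_disk" for z
    using holomorphic_power_series[OF hol that] by (simp add: a_def)
  define x where "x = complex_of_real ((1 + r) / 2)"
  have x: "x \<in> unit_disk" unfolding x_def mem_ball dist_0_norm norm_of_real using r by simp
  have "norm (complex_of_real r) < norm x"
    unfolding x_def norm_of_real using r by simp
  with sums_summable[OF taylor[OF x]]
  have summable: "summable (\<lambda>n. norm (a n * (complex_of_real r)^n))"
    by (rule powser_insidea)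
  have bnd: "norm (F n z) \<le> norm (a n * (complex_of_real r)^n) * norm (indicator (ball 0 r) z *\<^sub>R \<psi> (cmod z))"
    for n z
  proof (cases "z \<in> ball 0 r")
    case True
    then have z: "cmod z < r" by simp
    have "cmod z ^ n * cmod z ^ k \<le> r ^ n * 1"
    proof (rule mult_mono)
      show "cmod z ^ n \<le> r ^ n" using z by (intro power_mono) auto
      show "cmod z ^ k \<le> 1" using z r by (intro power_le_one) auto
    qed (use r in auto)
    then have "norm (a n) * (cmod z ^ n * cmod z ^ k) * \<bar>\<psi> (cmod z)\<bar> \<le> norm (a n) * (r ^ n * 1) * \<bar>\<psi> (cmod z)\<bar>"
      by (intro mult_right_mono mult_left_mono) auto
    then show ?thesis using True r by (simp add: F_def norm_mult norm_power)
  qed (simp add: F_def)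
  have sums_F: "(\<lambda>n. F n z) sums (indicator (ball 0 r) z *\<^sub>R (g z * cnj z ^ k * complex_of_real (\<psi> (cmod z))))" for z
  proof (cases "z \<in> ball 0 r")
    case True
    then have "z \<in> unit_disk" using r by auto
    from sums_mult2[OF taylor[OF this], of "cnj z ^ k * complex_of_real (\<psi> (cmod z))"]
    show ?thesis using True by (simp add: F_def mult_ac)
  qed (simp add: F_def)
  define J where "J = complex_of_real (integral\<^sup>L lborel (\<lambda>z. indicator (ball 0 r) z *\<^sub>R ((cmod z)^(2*k) * \<psi> (cmod z))))"
  have integral_F: "integral\<^sup>L lborel (F n) = (if n = k then a k * J else 0)" for n
  proof -
    have "integral\<^sup>L lborel (F n) = a n * integral\<^sup>L lborel (\<lambda>z. indicator (ball 0 r) z *\<^sub>R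
               (z^n * cnj z ^ k * complex_of_real (\<psi> (cmod z))))"
      unfolding F_def by (simp add: scaleR_conv_of_real mult_ac)
    also have "\<dots> = (if n = k then a k * J else 0)"
    proof (cases "n = k")
      case True
      have "z^k * cnj z ^ k = complex_of_real ((cmod z)^(2*k))" for z
      proof -
        have "z^k * cnj z ^ k = (z * cnj z) ^ k" by (simp add: power_mult_distrib)
        also have "z * cnj z = complex_of_real ((cmod z)^2)" by (rule complex_norm_square[symmetric])
        finally show ?thesis by (simp add: power_mult)
      qed
      then show ?thesis using True unfolding J_def
        by (simp add: scaleR_conv_of_real mult_ac flip: integral_complex_of_real)
    next
      case False
      then show ?thesis by (simp add: integral_ball_monomials_orthogonal)
    qed
    finally show ?thesis .
  qed
  from integral_sums_dominated[OF measF integrable_norm[OF \<psi>] _ bnd summable _ sums_F]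
  have "(\<lambda>n. if n = k then a k * J else 0) sums
          integral\<^sup>L lborel (\<lambda>z. indicator (ball 0 r) z *\<^sub>R (g z * cnj z ^ k * complex_of_real (\<psi> (cmod z))))"
    by (simp add: integral_F)
  moreover have "(\<lambda>n. if n = k then a k * J else 0) sums (a k * J)"
    using sums_single[of k "\<lambda>_. a k * J"] by simp
  ultimately show ?thesis by (simp add: a_def J_def sums_unique2)
qed

lemma bergman_integral_moment:
  fixes g :: "complex \<Rightarrow> complex" and k :: nat
  assumes a: "\<alpha> > -1" and hol: "g holomorphic_on unit_disk"
    and g: "integrable lborel (\<lambda>z. indicator unit_disk z *\<^sub>R (cmod (g z) * disk_weight \<alpha> z))"
  shows "bergman_integral \<alpha> (\<lambda>z. g z * cnj z ^ k)
           = (deriv^^k) g 0 / fact k * complex_of_real (pi * Beta (real k + 1) (\<alpha> + 1))"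
proof -
  define \<psi> where "\<psi> = (\<lambda>t::real. (1 - t\<^sup>2) powr \<alpha>)"
  define r where "r = (\<lambda>j::nat. 1 - inverse (real (Suc j)))"
  have r0: "0 \<le> r j" "r j < 1" for j by (auto simp: r_def field_simps)
  have r_lim: "r \<longlonglongrightarrow> 1"
    unfolding r_def using LIMSEQ_inverse_real_of_nat_add_minus[of 1] by simp
  have gc: "continuous_on unit_disk g" using hol by (rule holomorphic_on_imp_continuous_on)
  let ?G = "\<lambda>z. g z * cnj z ^ k * complex_of_real (disk_weight \<alpha> z)"
  let ?M = "\<lambda>z. (cmod z)^(2*k) * disk_weight \<alpha> z"
  have G_int: "integrable lborel (\<lambda>z. indicator unit_disk z *\<^sub>R ?G z)"
  proof (rule Bochner_Integration.integrable_bound[OF g])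
    show "(\<lambda>z. indicator unit_disk z *\<^sub>R ?G z) \<in> borel_measurable lborel"
      by (rule lborel_measurable_indicator_continuous_on)
         (auto intro!: continuous_intros continuous_on_disk_weight gc)
    show "AE z in lborel. norm (indicator unit_disk z *\<^sub>R ?G z)
            \<le> norm (indicator unit_disk z *\<^sub>R (cmod (g z) * disk_weight \<alpha> z))"
    proof (intro AE_I2)
      fix z :: complex
      show "norm (indicator unit_disk z *\<^sub>R ?G z) \<le> norm (indicator unit_disk z *\<^sub>R (cmod (g z) * disk_weight \<alpha> z))"
      proof (cases "z \<in> unit_disk")
        case True
        then have "cmod z ^ k \<le> 1" by (intro power_le_one) auto
        then have "cmod (g z) * cmod z ^ k * disk_weight \<alpha> z \<le> cmod (g z) * 1 * disk_weight \<alpha> z"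
          by (intro mult_right_mono mult_left_mono) auto
        then show ?thesis using True by (simp add: norm_mult norm_power)
      qed simp
    qed
  qed
  have ball: "integral\<^sup>L lborel (\<lambda>z. indicator (ball 0 (r j)) z *\<^sub>R ?G z) =
              (deriv^^k) g 0 / fact k * complex_of_real (integral\<^sup>L lborel (\<lambda>z. indicator (ball 0 (r j)) z *\<^sub>R ?M z))"
    for j
  proof -
    have "integrable lborel (\<lambda>z. indicator (ball 0 (r j)) z *\<^sub>R (indicator unit_disk z *\<^sub>R disk_weight \<alpha> z))"
      by (intro integrable_mult_indicator integrable_disk_weight a) auto
    moreover have "(\<lambda>z. indicator (ball 0 (r j)) z *\<^sub>R (indicator unit_disk z *\<^sub>R disk_weight \<alpha> z)) =
                   (\<lambda>z. indicator (ball 0 (r j)) z *\<^sub>R \<psi> (cmod z))"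
      using r0[of j] by (auto simp: fun_eq_iff indicator_def \<psi>_def)
    ultimately have "integrable lborel (\<lambda>z. indicator (ball 0 (r j)) z *\<^sub>R \<psi> (cmod z))"
      by (simp only:)
    moreover have "\<psi> \<in> borel_measurable borel" unfolding \<psi>_def by measurable
    ultimately show ?thesis
      using integral_ball_holomorphic_radial_moment[OF hol r0[of j]] unfolding \<psi>_def by blast
  qed
  have "(\<lambda>j. integral\<^sup>L lborel (\<lambda>z. indicator (ball 0 (r j)) z *\<^sub>R ?G z))
          \<longlonglongrightarrow> bergman_integral \<alpha> (\<lambda>z. g z * cnj z ^ k)"
    unfolding bergman_integral_def
    by (rule integral_ball_tendsto_integral_unit_disk[OF G_int r_lim less_imp_le[OF r0(2)]])
  moreover have "(\<lambda>j. integral\<^sup>L lborel (\<lambda>z. indicator (ball 0 (r j)) z *\<^sub>R ?M z))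
                   \<longlonglongrightarrow> pi * Beta (real k + 1) (\<alpha> + 1)"
    using integral_ball_tendsto_integral_unit_disk[OF integrable_disk_weight_moment[OF a, of k] r_lim less_imp_le[OF r0(2)]]
    unfolding integral_disk_weight_moment[OF a] .
  then have "(\<lambda>j. integral\<^sup>L lborel (\<lambda>z. indicator (ball 0 (r j)) z *\<^sub>R ?G z))
               \<longlonglongrightarrow> (deriv^^k) g 0 / fact k * complex_of_real (pi * Beta (real k + 1) (\<alpha> + 1))"
    unfolding ball by (intro tendsto_mult tendsto_of_real tendsto_const)
  ultimately show ?thesis by (rule LIMSEQ_unique)
qed

section \<open>Series expansion of the kernel \<open>K1\<close>\<close>

definition K1_coeff :: "real \<Rightarrow> nat \<Rightarrow> real" where
  "K1_coeff \<alpha> m = (\<alpha> + 2) * (pochhammer (\<alpha> + 3) m / fact m)"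

lemma K1_coeff_nonneg: "\<alpha> > -1 \<Longrightarrow> K1_coeff \<alpha> m \<ge> 0"
  unfolding K1_coeff_def by (intro mult_nonneg_nonneg divide_nonneg_pos pochhammer_nonneg) auto

lemma K1_coeff_Beta:
  fixes m :: nat assumes a: "\<alpha> > -1"
  shows "(\<alpha> + 1) * K1_coeff \<alpha> m * Beta (real (Suc m) + 1) (\<alpha> + 1) / fact (Suc m) = 1 / fact m"
proof -
  have n1: "\<alpha> + 1 \<notin> \<int>\<^sub>\<le>\<^sub>0" "\<alpha> + 2 \<notin> \<int>\<^sub>\<le>\<^sub>0" "\<alpha> + 3 \<notin> \<int>\<^sub>\<le>\<^sub>0" using a by auto
  have G3: "Gamma (\<alpha> + 3) = (\<alpha> + 2) * ((\<alpha> + 1) * Gamma (\<alpha> + 1))"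
  proof -
    have "Gamma (\<alpha> + 3) = Gamma ((\<alpha> + 2) + 1)" by (simp add: add.assoc)
    also have "\<dots> = (\<alpha> + 2) * Gamma (\<alpha> + 2)" by (rule Gamma_plus1[OF n1(2)])
    also have "Gamma (\<alpha> + 2) = Gamma ((\<alpha> + 1) + 1)" by (simp add: add.assoc)
    also have "\<dots> = (\<alpha> + 1) * Gamma (\<alpha> + 1)" by (rule Gamma_plus1[OF n1(1)])
    finally show ?thesis .
  qed
  have P: "pochhammer (\<alpha> + 3) m = Gamma (\<alpha> + 3 + real m) / Gamma (\<alpha> + 3)"
    using pochhammer_Gamma[OF n1(3)] by simp
  have Gm: "Gamma (real (Suc m) + 1) = fact (Suc m)"
    using Gamma_fact[of "Suc m", where 'a=real] by (simp add: add.commute)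
  have B: "Beta (real (Suc m) + 1) (\<alpha> + 1) = fact (Suc m) * Gamma (\<alpha> + 1) / Gamma (\<alpha> + 3 + real m)"
    unfolding Beta_def Gm by (simp add: algebra_simps)
  have pos: "Gamma (\<alpha> + 1) > 0" "Gamma (\<alpha> + 3 + real m) > 0" using a by auto
  have field: "A * (B * ((GM / (B * (A * G1))) / F)) * (F1 * G1 / GM) / F1 = 1 / F"
    if "A > 0" "B > 0" "G1 > 0" "GM > 0" "F > 0" "F1 > 0" for A B G1 GM F F1 :: real
    using that by (simp add: field_simps)
  show ?thesis unfolding K1_coeff_def P B G3
    by (rule field) (use a pos in auto)
qed

lemma sums_pochhammer_powr:
  fixes u :: complex and s :: real assumes u: "norm u < 1"
  shows "(\<lambda>m. complex_of_real (pochhammer s m / fact m) * u^m) sums inverse ((1 - u) powr complex_of_real s)"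
proof -
  have "norm (-u) < 1" using u by simp
  from gen_binomial_complex[OF this, of "- complex_of_real s"]
  have "(\<lambda>n. (- complex_of_real s gchoose n) * (- u) ^ n) sums (1 + - u) powr (- complex_of_real s)" .
  moreover have "(- complex_of_real s gchoose n) * (- u) ^ n = complex_of_real (pochhammer s n / fact n) * u^n" for n
  proof -
    have "(- complex_of_real s gchoose n) * (- u) ^ n
            = ((-1)^n * (-1)^n) * (pochhammer (complex_of_real s) n / fact n) * u^n"
      by (simp add: gbinomial_pochhammer power_minus[of u] mult_ac)
    also have "(-1)^n * (-1)^n = (1::complex)" by (simp flip: power_mult_distrib)
    finally show ?thesis by (simp add: pochhammer_of_real)
  qed
  ultimately show ?thesis by (simp add: powr_minus)
qed

lemma summable_K1_coeff:
  assumes "0 \<le> t" "t < 1"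
  shows "summable (\<lambda>m. K1_coeff \<alpha> m * t^m)"
proof -
  have "norm (complex_of_real t) < 1" using assms by simp
  from sums_summable[OF sums_pochhammer_powr[OF this, of "\<alpha> + 3"]]
  have "summable (\<lambda>m. complex_of_real (pochhammer (\<alpha> + 3) m / fact m * t^m))" by simp
  then have "summable (\<lambda>m. pochhammer (\<alpha> + 3) m / fact m * t^m)"
    by (simp only: summable_complex_of_real)
  from summable_mult[OF this, of "\<alpha> + 2"] show ?thesis
    by (simp add: K1_coeff_def mult_ac)
qed

lemma K1_sums:
  assumes "norm (cnj w * z) < 1"
  shows "(\<lambda>m. complex_of_real (K1_coeff \<alpha> m) * cnj w ^ m * z ^ Suc m) sums K1 \<alpha> w z"
proof -
  have "(\<lambda>m. complex_of_real (\<alpha> + 2) * z * (complex_of_real (pochhammer (\<alpha> + 3) m / fact m) * (cnj w * z)^m))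
          sums (complex_of_real (\<alpha> + 2) * z * inverse ((1 - cnj w * z) powr complex_of_real (\<alpha> + 3)))"
    by (rule sums_mult[OF sums_pochhammer_powr[OF assms]])
  moreover have "(\<lambda>m. complex_of_real (\<alpha> + 2) * z * (complex_of_real (pochhammer (\<alpha> + 3) m / fact m) * (cnj w * z)^m))
                   = (\<lambda>m. complex_of_real (K1_coeff \<alpha> m) * cnj w ^ m * z ^ Suc m)"
    by (simp add: fun_eq_iff K1_coeff_def power_mult_distrib mult_ac)
  moreover have "complex_of_real (\<alpha> + 2) * z * inverse ((1 - cnj w * z) powr complex_of_real (\<alpha> + 3)) = K1 \<alpha> w z"
    by (simp add: K1_def divide_inverse)
  ultimately show ?thesis
    by (simp only:)
qed

lemma cnj_K1_sums:
  assumes "norm (cnj w * z) < 1"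
  shows "(\<lambda>m. complex_of_real (K1_coeff \<alpha> m) * w ^ m * cnj z ^ Suc m) sums cnj (K1 \<alpha> w z)"
proof -
  have "(\<lambda>m. cnj (complex_of_real (K1_coeff \<alpha> m) * cnj w ^ m * z ^ Suc m)) sums cnj (K1 \<alpha> w z)"
    using K1_sums[OF assms] by (simp only: sums_cnj)
  then show ?thesis by simp
qed

lemma bergman_integral_Taylor_coeff:
  fixes g :: "complex \<Rightarrow> complex"
  assumes a: "\<alpha> > -1" and hol: "g holomorphic_on unit_disk"
    and g: "integrable lborel (\<lambda>z. indicator unit_disk z *\<^sub>R (cmod (g z) * disk_weight \<alpha> z))"
  shows "complex_of_real ((\<alpha> + 1) / pi * K1_coeff \<alpha> m) * bergman_integral \<alpha> (\<lambda>z. g z * cnj z ^ Suc m)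
           = (deriv^^Suc m) g 0 / fact m"
proof -
  have "(\<alpha> + 1) / pi * K1_coeff \<alpha> m * (pi * Beta (real (Suc m) + 1) (\<alpha> + 1)) / fact (Suc m)
          = (\<alpha> + 1) * K1_coeff \<alpha> m * Beta (real (Suc m) + 1) (\<alpha> + 1) / fact (Suc m)"
    by simp
  also have "\<dots> = 1 / fact m" by (rule K1_coeff_Beta[OF a])
  finally have coeff: "(\<alpha> + 1) / pi * K1_coeff \<alpha> m * (pi * Beta (real (Suc m) + 1) (\<alpha> + 1)) / fact (Suc m)
                         = 1 / fact m" .
  have "complex_of_real ((\<alpha> + 1) / pi * K1_coeff \<alpha> m) * bergman_integral \<alpha> (\<lambda>z. g z * cnj z ^ Suc m)
          = complex_of_real ((\<alpha> + 1) / pi * K1_coeff \<alpha> m * (pi * Beta (real (Suc m) + 1) (\<alpha> + 1)) / fact (Suc m))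
            * (deriv^^Suc m) g 0"
    unfolding bergman_integral_moment[OF a hol g] by (simp add: field_simps)
  also have "\<dots> = (deriv^^Suc m) g 0 / fact m"
    unfolding coeff by (simp add: field_simps)
  finally show ?thesis .
qed

lemma deriv_sums_bergman_moments:
  fixes g :: "complex \<Rightarrow> complex"
  assumes a: "\<alpha> > -1" and hol: "g holomorphic_on unit_disk"
    and g: "integrable lborel (\<lambda>z. indicator unit_disk z *\<^sub>R (cmod (g z) * disk_weight \<alpha> z))"
    and w: "w \<in> unit_disk"
  shows "(\<lambda>m. complex_of_real ((\<alpha> + 1) / pi * K1_coeff \<alpha> m) * bergman_integral \<alpha> (\<lambda>z. g z * cnj z ^ Suc m) * w ^ m)
           sums deriv g w"
proof -
  have "deriv g holomorphic_on unit_disk" by (rule holomorphic_deriv[OF hol]) simp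
  from holomorphic_power_series[OF this w]
  have "(\<lambda>m. (deriv^^m) (deriv g) 0 / fact m * w^m) sums deriv g w" by simp
  moreover have "(deriv^^m) (deriv g) = (deriv^^Suc m) g" for m
    by (simp add: funpow_Suc_right del: funpow.simps)
  ultimately have "(\<lambda>m. (deriv^^Suc m) g 0 / fact m * w^m) sums deriv g w" by simp
  then show ?thesis
    by (simp only: bergman_integral_Taylor_coeff[OF a hol g])
qed

lemma K1_reproduces_deriv:
  fixes g :: "complex \<Rightarrow> complex"
  assumes a: "\<alpha> > -1" and hol: "g holomorphic_on unit_disk"
    and g: "integrable lborel (\<lambda>z. indicator unit_disk z *\<^sub>R (cmod (g z) * disk_weight \<alpha> z))"
    and w: "w \<in> unit_disk"
  shows "complex_of_real ((\<alpha> + 1) / pi) * bergman_integral \<alpha> (\<lambda>z. g z * cnj (K1 \<alpha> w z)) = deriv g w"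
proof -
  have gc: "continuous_on unit_disk g" using hol by (rule holomorphic_on_imp_continuous_on)
  have wn: "cmod w < 1" using w by simp
  have "(\<lambda>m. bergman_integral \<alpha> (\<lambda>z. complex_of_real (K1_coeff \<alpha> m) * w ^ m * (g z * cnj z ^ Suc m)))
          sums bergman_integral \<alpha> (\<lambda>z. g z * cnj (K1 \<alpha> w z))"
  proof (rule bergman_integral_sums[OF _ _ g _ summable_K1_coeff[OF norm_ge_zero wn]])
    show "continuous_on unit_disk (\<lambda>z. complex_of_real (K1_coeff \<alpha> m) * w ^ m * (g z * cnj z ^ Suc m))" for m
      by (intro continuous_intros gc)
    show "K1_coeff \<alpha> m * cmod w ^ m \<ge> 0" for m using K1_coeff_nonneg[OF a] by simp
    show "cmod (g z) \<ge> 0" for z by simp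
    fix m z assume z: "z \<in> unit_disk"
    then have "cmod z ^ Suc m \<le> 1" by (intro power_le_one) auto
    then have "K1_coeff \<alpha> m * cmod w ^ m * (cmod (g z) * cmod z ^ Suc m) \<le> K1_coeff \<alpha> m * cmod w ^ m * (cmod (g z) * 1)"
      using K1_coeff_nonneg[OF a] by (intro mult_left_mono) auto
    then show "norm (complex_of_real (K1_coeff \<alpha> m) * w ^ m * (g z * cnj z ^ Suc m)) \<le> K1_coeff \<alpha> m * cmod w ^ m * cmod (g z)"
      using K1_coeff_nonneg[OF a, of m] by (simp add: norm_mult norm_power)
  next
    fix z assume z: "z \<in> unit_disk"
    have "norm (cnj w * z) < 1"
      using z wn by (simp add: norm_mult) (metis mult_strict_mono' norm_ge_zero mult_1_left)
    from sums_mult[OF cnj_K1_sums[OF this, of \<alpha>], of "g z"]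
    show "(\<lambda>m. complex_of_real (K1_coeff \<alpha> m) * w ^ m * (g z * cnj z ^ Suc m)) sums (g z * cnj (K1 \<alpha> w z))"
      by (simp add: mult_ac)
  qed
  from sums_mult[OF this[unfolded bergman_integral_cmult], of "complex_of_real ((\<alpha> + 1) / pi)"]
  have "(\<lambda>m. complex_of_real ((\<alpha> + 1) / pi * K1_coeff \<alpha> m) * bergman_integral \<alpha> (\<lambda>z. g z * cnj z ^ Suc m) * w ^ m)
          sums (complex_of_real ((\<alpha> + 1) / pi) * bergman_integral \<alpha> (\<lambda>z. g z * cnj (K1 \<alpha> w z)))"
    by (simp only: of_real_mult mult_ac)
  from sums_unique2[OF this deriv_sums_bergman_moments[OF a hol g w]] show ?thesis .
qed

section \<open>Linear fractional maps of the closed disk into the open disk\<close>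

definition lfm_maps_closed_disk_into_disk :: "complex \<Rightarrow> complex \<Rightarrow> complex \<Rightarrow> complex \<Rightarrow> bool" where
  "lfm_maps_closed_disk_into_disk a b c d \<longleftrightarrow>
     (\<forall>z. cmod z \<le> 1 \<longrightarrow> c * z + d \<noteq> 0 \<and> cmod (lfm a b c d z) < 1)"

lemma lfm_holomorphic_on: "(\<And>z. z \<in> S \<Longrightarrow> c * z + d \<noteq> 0) \<Longrightarrow> lfm a b c d holomorphic_on S"
  unfolding lfm_def[abs_def] by (intro holomorphic_intros) auto

lemma lfm_bounded_imp_norm_c_less_d:
  fixes a b c d :: complex and s :: real
  assumes nondeg: "a * d - b * c \<noteq> 0"
      and selfmap: "\<forall>z\<in>unit_disk. c * z + d \<noteq> 0"
      and bnd: "\<forall>z\<in>unit_disk. cmod (lfm a b c d z) \<le> s"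
  shows "cmod c < cmod d"
proof (rule ccontr)
  assume "\<not> cmod c < cmod d"
  then have cd: "cmod d \<le> cmod c" by simp
  have d0: "d \<noteq> 0" using selfmap by force
  then have c0: "c \<noteq> 0" using cd by auto
  define z0 where "z0 = - d / c"
  have z0n: "cmod z0 \<le> 1" using cd c0 by (simp add: z0_def norm_divide divide_le_eq)
  have cz0: "c * z0 + d = 0" using c0 by (simp add: z0_def)
  show False
  proof (cases "cmod z0 < 1")
    case True then show False using selfmap cz0 by auto
  next
    case False
    then have z1: "cmod z0 = 1" using z0n by simp
    define N where "N = cmod (a * z0 + b)"
    have "a * z0 + b = - (a * d - b * c) / c" using c0 by (simp add: z0_def field_simps)
    then have N0: "N > 0" using nondeg c0 by (simp add: N_def)
    have s0: "s \<ge> 0" using bnd[rule_format, of 0] by (auto intro: order_trans[OF norm_ge_zero])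
    define M where "M = cmod a + s * cmod d + 1"
    have "s * cmod d \<ge> 0" using s0 by simp
    then have M0: "M > 0" unfolding M_def by (smt (verit) norm_ge_zero)
    define e where "e = min (1/2) (N / (2 * M))"
    have e0: "e > 0" "e \<le> 1/2" using N0 M0 by (auto simp: e_def)
    define z where "z = complex_of_real (1 - e) * z0"
    have "cmod z = \<bar>1 - e\<bar> * 1" unfolding z_def norm_mult norm_of_real z1 ..
    then have zD: "z \<in> unit_disk" using e0 by simp
    have cz0': "c * z0 = - d" using cz0 by (simp add: add_eq_0_iff)
    have "c * z + d = (1 - e) * (c * z0) + d" by (simp add: z_def algebra_simps)
    then have den: "c * z + d = d * e" unfolding cz0' by (simp add: algebra_simps)
    have num: "cmod (a * z + b) \<ge> N - cmod a * e"
    proof -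
      have "a * z + b = (a * z0 + b) - a * e * z0" by (simp add: z_def algebra_simps)
      then have "N \<le> cmod (a * z + b) + cmod (a * e * z0)"
        unfolding N_def by (metis norm_triangle_sub add.commute diff_add_cancel norm_triangle_ineq)
      moreover have "cmod (a * e * z0) = cmod a * e" using z1 e0 by (simp add: norm_mult)
      ultimately show ?thesis by simp
    qed
    have "cmod (lfm a b c d z) \<le> s" using bnd zD by auto
    then have "cmod (a * z + b) \<le> s * (cmod d * e)"
      using d0 e0 by (simp add: lfm_def den norm_divide norm_mult divide_le_eq mult_ac)
    with num have "N \<le> (cmod a + s * cmod d) * e" by (simp add: algebra_simps)
    also have "\<dots> \<le> (cmod a + s * cmod d) * (N / (2 * M))"
      using s0 by (intro mult_left_mono) (auto simp: e_def)
    also have "\<dots> < N"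
    proof -
      have "(cmod a + s * cmod d) * (N / (2 * M)) = N * ((cmod a + s * cmod d) / (2 * M))" by simp
      also have "(cmod a + s * cmod d) / (2 * M) < 1" using M0 by (simp add: M_def field_simps)
      then have "N * ((cmod a + s * cmod d) / (2 * M)) < N * 1" using N0 by (intro mult_strict_left_mono) auto
      finally show ?thesis by simp
    qed
    finally show False by simp
  qed
qed

lemma lfm_maps_closed_disk_into_disk_if_SUP_less_1:
  fixes a b c d :: complex
  assumes nondeg: "a * d - b * c \<noteq> 0"
      and selfmap: "\<forall>z\<in>unit_disk. c * z + d \<noteq> 0 \<and> lfm a b c d z \<in> unit_disk"
      and supnorm: "(SUP z\<in>unit_disk. cmod (lfm a b c d z)) < 1"
  shows "lfm_maps_closed_disk_into_disk a b c d"
  unfolding lfm_maps_closed_disk_into_disk_def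
proof (intro allI impI)
  fix z :: complex assume z: "cmod z \<le> 1"
  define s where "s = (SUP z\<in>unit_disk. cmod (lfm a b c d z))"
  have bdd: "bdd_above ((\<lambda>z. cmod (lfm a b c d z)) ` unit_disk)"
    using selfmap by (intro bdd_aboveI[of _ 1]) auto
  have s_upper: "cmod (lfm a b c d z) \<le> s" if "z \<in> unit_disk" for z
    unfolding s_def by (rule cSUP_upper[OF that bdd])
  have "cmod c < cmod d"
    by (rule lfm_bounded_imp_norm_c_less_d[OF nondeg]) (use selfmap s_upper in auto)
  have den: "c * z + d \<noteq> 0" if "cmod z \<le> 1" for z
  proof
    assume "c * z + d = 0"
    then have "cmod d = cmod c * cmod z" by (metis add_eq_0_iff norm_minus_cancel norm_mult)
    also have "\<dots> \<le> cmod c" using that by (simp add: mult_left_le)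
    finally show False using \<open>cmod c < cmod d\<close> by simp
  qed
  have "continuous_on (cball 0 1) (lfm a b c d)"
    by (intro holomorphic_on_imp_continuous_on lfm_holomorphic_on den) simp
  then have "lfm a b c d ` closure unit_disk \<subseteq> cball 0 s"
    by (intro image_closure_subset) (use s_upper in auto)
  moreover have "z \<in> closure unit_disk" using z by simp
  ultimately have "lfm a b c d z \<in> cball 0 s" by blast
  then have "cmod (lfm a b c d z) \<le> s" by simp
  with supnorm den[OF z] show "c * z + d \<noteq> 0 \<and> cmod (lfm a b c d z) < 1" by (simp add: s_def)
qed

text \<open>If \<open>\<bar>\<sigma> u\<bar> \<ge> 1\<close> for the Krein adjoint \<open>\<sigma>\<close>, then the point
  \<open>x = (d - b * cnj u) / (a * cnj u - c)\<close> of the closed disk has \<open>\<phi> x = 1 / cnj u\<close>.\<close>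
lemma Krein_adjoint_maps_closed_disk_into_disk:
  fixes a b c d :: complex
  assumes nondeg: "a * d - b * c \<noteq> 0" and "lfm_maps_closed_disk_into_disk a b c d"
  shows "lfm_maps_closed_disk_into_disk (cnj a) (- cnj c) (- cnj b) (cnj d)"
  unfolding lfm_maps_closed_disk_into_disk_def
proof (intro allI impI conjI)
  fix u :: complex assume u: "cmod u \<le> 1"
  have phi: "c * z + d \<noteq> 0 \<and> cmod (lfm a b c d z) < 1" if "cmod z \<le> 1" for z
    using assms(2) that by (simp add: lfm_maps_closed_disk_into_disk_def)
  have d0: "d \<noteq> 0" using phi[of 0] by simp
  have "cmod b < cmod d"
    using phi[of 0] d0 by (simp add: lfm_def norm_divide divide_less_eq)
  show den: "- cnj b * u + cnj d \<noteq> 0"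
  proof
    assume "- cnj b * u + cnj d = 0"
    then have "cmod d = cmod b * cmod u" by (metis add_eq_0_iff2 complex_mod_cnj norm_minus_cancel norm_mult)
    also have "\<dots> \<le> cmod b" using u by (simp add: mult_left_le)
    finally show False using \<open>cmod b < cmod d\<close> by simp
  qed
  show "cmod (lfm (cnj a) (- cnj c) (- cnj b) (cnj d) u) < 1"
  proof (rule ccontr)
    assume "\<not> ?thesis"
    then have ge: "cmod (cnj d - cnj b * u) \<le> cmod (cnj a * u - cnj c)"
      using den by (simp add: lfm_def norm_divide divide_less_eq)
    define p where "p = cnj a * u - cnj c"
    have p0: "p \<noteq> 0"
    proof
      assume "p = 0"
      then have "cnj d - cnj b * u = 0" using ge by (simp add: p_def)
      then show False using den by simp
    qed
    define x where "x = (d - b * cnj u) / cnj p"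
    have x: "cmod x \<le> 1"
    proof -
      have "cmod (d - b * cnj u) = cmod (cnj d - cnj b * u)"
        by (metis complex_cnj_diff complex_cnj_mult complex_cnj_cnj complex_mod_cnj)
      also have "\<dots> \<le> cmod p" using ge by (simp add: p_def)
      finally have "cmod (d - b * cnj u) \<le> cmod p" .
      moreover have "cmod x = cmod (d - b * cnj u) / cmod p"
        unfolding x_def norm_divide complex_mod_cnj ..
      ultimately show ?thesis using p0 by (simp add: divide_le_eq)
    qed
    have cp: "cnj p = a * cnj u - c" by (simp add: p_def)
    have cp0: "a * cnj u - c \<noteq> 0" using p0 cp by (metis complex_cnj_zero_iff)
    have cx: "c * x + d = cnj u * (a * d - b * c) / cnj p"
      using cp0 unfolding x_def cp by (simp add: field_simps)
    have ax: "a * x + b = (a * d - b * c) / cnj p"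
      using cp0 unfolding x_def cp by (simp add: field_simps)
    have u0: "u \<noteq> 0"
    proof
      assume "u = 0"
      then have "c * x + d = 0" using cx by simp
      then show False using phi[OF x] by simp
    qed
    have "lfm a b c d x = 1 / cnj u"
      using p0 u0 nondeg unfolding lfm_def ax cx by (simp add: field_simps)
    then have "cmod (lfm a b c d x) = 1 / cmod u" by (simp add: norm_divide)
    also have "\<dots> \<ge> 1" using u u0 by simp
    finally show False using phi[OF x] by simp
  qed
qed

lemma lfm_maps_closed_disk_into_disk_holomorphic:
  "lfm_maps_closed_disk_into_disk a b c d \<Longrightarrow> lfm a b c d holomorphic_on cball 0 1"
  by (rule lfm_holomorphic_on) (simp add: lfm_maps_closed_disk_into_disk_def)

lemma lfm_maps_closed_disk_into_disk_bound:
  assumes "lfm_maps_closed_disk_into_disk a b c d"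
  obtains t where "t < 1" "\<And>z. cmod z \<le> 1 \<Longrightarrow> cmod (lfm a b c d z) \<le> t"
proof -
  let ?N = "(\<lambda>z. cmod (lfm a b c d z)) ` cball 0 1"
  have "compact ?N"
    using lfm_maps_closed_disk_into_disk_holomorphic[OF assms]
    by (intro compact_continuous_image continuous_intros holomorphic_on_imp_continuous_on) auto
  then obtain t where "t \<in> ?N" "\<forall>y \<in> ?N. y \<le> t"
    using compact_attains_sup[of ?N] by auto
  moreover from assms have "\<forall>y \<in> ?N. y < 1"
    by (auto simp: lfm_maps_closed_disk_into_disk_def)
  ultimately show ?thesis using that by auto
qed

lemma lfm_Krein_pair_uniform_bound:
  assumes nondeg: "a * d - b * c \<noteq> 0" and maps: "lfm_maps_closed_disk_into_disk a b c d"
  obtains t where "t < 1" "\<And>z. z \<in> unit_disk \<Longrightarrow> cmod (lfm a b c d z) \<le> t"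
    "\<And>z. z \<in> unit_disk \<Longrightarrow> cmod (lfm (cnj a) (- cnj c) (- cnj b) (cnj d) z) \<le> t"
proof -
  obtain t1 where "t1 < 1" "\<And>z. cmod z \<le> 1 \<Longrightarrow> cmod (lfm a b c d z) \<le> t1"
    using lfm_maps_closed_disk_into_disk_bound[OF maps] by blast
  moreover obtain t2 where "t2 < 1" "\<And>z. cmod z \<le> 1 \<Longrightarrow> cmod (lfm (cnj a) (- cnj c) (- cnj b) (cnj d) z) \<le> t2"
    using lfm_maps_closed_disk_into_disk_bound[OF Krein_adjoint_maps_closed_disk_into_disk[OF nondeg maps]] by blast
  ultimately show ?thesis
    using that[of "max t1 t2"] by (fastforce simp: le_max_iff_disj)
qed

section \<open>The kernel identity for a linear fractional map and its Krein adjoint\<close>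

lemma powr_mult_Re_pos:
  fixes w z t :: complex
  assumes "Re w > 0" "Re z > 0"
  shows "(w * z) powr t = w powr t * z powr t"
proof -
  have w0: "w \<noteq> 0" and z0: "z \<noteq> 0" using assms by auto
  have "\<bar>Im (Ln w)\<bar> < pi/2" "\<bar>Im (Ln z)\<bar> < pi/2"
    using Re_Ln_pos_lt_imp[OF assms(1)] Re_Ln_pos_lt_imp[OF assms(2)] by auto
  then have "Ln (w * z) = Ln w + Ln z" using Ln_times[OF w0 z0] by auto
  then show ?thesis using w0 z0 by (simp add: powr_def exp_add algebra_simps)
qed

lemma Re_one_minus_pos: "cmod v < 1 \<Longrightarrow> Re (1 - v) > 0"
  using abs_Re_le_cmod[of v] by auto

lemma norm_cnj_mult_less_1: "cmod v < 1 \<Longrightarrow> cmod w \<le> 1 \<Longrightarrow> cmod (cnj v * w) < 1"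
  by (simp add: norm_mult) (metis mult_left_le norm_ge_zero order.strict_trans1)

lemma lfm_Krein_factor_identity:
  fixes a b c d u z :: complex
  assumes d: "d \<noteq> 0" and den_u: "- cnj b * u + cnj d \<noteq> 0" and den_z: "c * z + d \<noteq> 0"
  shows "(1 - cnj (lfm a b c d 0) * u) * (1 - lfm (cnj a) (- cnj c) (- cnj b) (cnj d) u * cnj z)
           = (1 - lfm (cnj a) (- cnj c) (- cnj b) (cnj d) 0 * cnj z) * (1 - cnj (lfm a b c d z) * u)"
proof -
  define A B C D Z where "A = cnj a" and "B = cnj b" and "C = cnj c" and "D = cnj d" and "Z = cnj z"
  have D: "D \<noteq> 0" and den_u': "- B * u + D \<noteq> 0" and den_z': "C * Z + D \<noteq> 0"
    using d den_u den_z unfolding A_def B_def C_def D_def Z_def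
    by (auto simp flip: complex_cnj_mult complex_cnj_add)
  have h1: "1 - cnj (lfm a b c d 0) * u = (- B * u + D) / D"
    using D by (simp add: lfm_def B_def D_def field_simps)
  have h2: "1 - lfm (cnj a) (- cnj c) (- cnj b) (cnj d) u * cnj z
                   = (- B * u + D - (A * u - C) * Z) / (- B * u + D)"
    using den_u' by (simp add: lfm_def A_def B_def C_def D_def Z_def field_simps)
  have h3: "1 - lfm (cnj a) (- cnj c) (- cnj b) (cnj d) 0 * cnj z = (C * Z + D) / D"
    using D by (simp add: lfm_def C_def D_def Z_def field_simps)
  have h4: "1 - cnj (lfm a b c d z) * u = (C * Z + D - (A * Z + B) * u) / (C * Z + D)"
    using den_z' by (simp add: lfm_def A_def B_def C_def D_def Z_def field_simps)
  have cancel: "(x / D) * (y / x) = y / D" if "x \<noteq> 0" for x y :: complex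
    using that by simp
  show ?thesis
    unfolding h1 h2 h3 h4 cancel[OF den_u'] cancel[OF den_z'] by (simp add: algebra_simps)
qed

text \<open>The powers \<open>(1 - cnj w * z) powr (\<alpha> + 3)\<close> of the factors multiply because all of
  them lie in the right half plane, where the principal logarithm is additive.\<close>
lemma K1_mult_cnj_K1_eq:
  fixes v w v' w' u z :: complex
  assumes factor: "(1 - cnj v * u) * (1 - w * cnj z) = (1 - w' * cnj z) * (1 - cnj v' * u)"
    and h1: "cmod (cnj v * u) < 1" and h2: "cmod (cnj w * z) < 1"
    and h3: "cmod (cnj w' * z) < 1" and h4: "cmod (cnj v' * u) < 1"
  shows "K1 \<alpha> v u * cnj (K1 \<alpha> w z) = cnj (K1 \<alpha> w' z) * K1 \<alpha> v' u"
proof -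
  define P where "P = (\<lambda>y::complex. y powr complex_of_real (\<alpha> + 3))"
  define A where "A = 1 - cnj v * u"
  define B where "B = 1 - cnj w * z"
  define C where "C = 1 - cnj w' * z"
  define E where "E = 1 - cnj v' * u"
  have rA: "Re A > 0" and rB: "Re B > 0" and rC: "Re C > 0" and rE: "Re E > 0"
    unfolding A_def B_def C_def E_def
    using Re_one_minus_pos[OF h1] Re_one_minus_pos[OF h2] Re_one_minus_pos[OF h3] Re_one_minus_pos[OF h4]
    by blast+
  have rcB: "Re (cnj B) > 0" and rcC: "Re (cnj C) > 0" using rB rC by auto
  have cP: "cnj (P y) = P (cnj y)" if "Re y > 0" for y
    unfolding P_def using that by (subst cnj_powr) auto
  have K1v: "K1 \<alpha> v u = complex_of_real (\<alpha> + 2) * u / P A" by (simp only: K1_def P_def A_def)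
  have "K1 \<alpha> w z = complex_of_real (\<alpha> + 2) * z / P B" by (simp only: K1_def P_def B_def)
  then have K1w: "cnj (K1 \<alpha> w z) = complex_of_real (\<alpha> + 2) * cnj z / P (cnj B)"
    by (simp only: complex_cnj_divide complex_cnj_mult complex_cnj_complex_of_real cP[OF rB])
  have "K1 \<alpha> w' z = complex_of_real (\<alpha> + 2) * z / P C" by (simp only: K1_def P_def C_def)
  then have K1w': "cnj (K1 \<alpha> w' z) = complex_of_real (\<alpha> + 2) * cnj z / P (cnj C)"
    by (simp only: complex_cnj_divide complex_cnj_mult complex_cnj_complex_of_real cP[OF rC])
  have K1v': "K1 \<alpha> v' u = complex_of_real (\<alpha> + 2) * u / P E" by (simp only: K1_def P_def E_def)
  have "A * cnj B = cnj C * E" using factor by (simp add: A_def B_def C_def E_def)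
  then have "P A * P (cnj B) = P (cnj C) * P E"
    unfolding P_def
    by (simp add: powr_mult_Re_pos[OF rA rcB, symmetric] powr_mult_Re_pos[OF rcC rE, symmetric])
  then show ?thesis unfolding K1v K1w K1w' K1v'
    by (simp add: mult_ac divide_simps)
qed


lemma K1_lfm_Krein_identity:
  fixes a b c d z u :: complex
  defines "\<phi> \<equiv> lfm a b c d"
      and "\<sigma> \<equiv> lfm (cnj a) (- cnj c) (- cnj b) (cnj d)"
  assumes nondeg: "a * d - b * c \<noteq> 0" and maps: "lfm_maps_closed_disk_into_disk a b c d"
    and z: "z \<in> unit_disk" and u: "u \<in> unit_disk"
  shows "K1 \<alpha> (\<phi> 0) u * cnj (K1 \<alpha> (\<sigma> u) z) = cnj (K1 \<alpha> (\<sigma> 0) z) * K1 \<alpha> (\<phi> z) u"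
proof (rule K1_mult_cnj_K1_eq)
  have \<phi>: "c * w + d \<noteq> 0 \<and> cmod (\<phi> w) < 1" if "cmod w \<le> 1" for w
    using maps that by (simp add: lfm_maps_closed_disk_into_disk_def \<phi>_def)
  have \<sigma>: "- cnj b * w + cnj d \<noteq> 0 \<and> cmod (\<sigma> w) < 1" if "cmod w \<le> 1" for w
    using Krein_adjoint_maps_closed_disk_into_disk[OF nondeg maps] that
    by (simp add: lfm_maps_closed_disk_into_disk_def \<sigma>_def)
  show "(1 - cnj (\<phi> 0) * u) * (1 - \<sigma> u * cnj z) = (1 - \<sigma> 0 * cnj z) * (1 - cnj (\<phi> z) * u)"
    unfolding \<phi>_def \<sigma>_def
    using \<phi>[of 0] \<phi>[of z] \<sigma>[of u] z u by (intro lfm_Krein_factor_identity) (auto simp: \<phi>_def)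
  show "cmod (cnj (\<phi> 0) * u) < 1" "cmod (cnj (\<sigma> u) * z) < 1"
       "cmod (cnj (\<sigma> 0) * z) < 1" "cmod (cnj (\<phi> z) * u) < 1"
    using \<phi>[of 0] \<phi>[of z] \<sigma>[of 0] \<sigma>[of u] z u by (auto intro!: norm_cnj_mult_less_1)
qed

lemma bergman_space_holomorphic: "f \<in> bergman_space \<alpha> \<Longrightarrow> f holomorphic_on unit_disk"
  by (simp add: bergman_space_def)

lemma bergman_space_integrable_norm:
  assumes a: "\<alpha> > -1" and f: "f \<in> bergman_space \<alpha>"
  shows "integrable lborel (\<lambda>z. indicator unit_disk z *\<^sub>R (cmod (f z) * disk_weight \<alpha> z))"
proof (rule Bochner_Integration.integrable_bound)
  have fc: "continuous_on unit_disk f"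
    using bergman_space_holomorphic[OF f] by (rule holomorphic_on_imp_continuous_on)
  show "integrable lborel (\<lambda>z. indicator unit_disk z *\<^sub>R disk_weight \<alpha> z +
                               indicator unit_disk z *\<^sub>R ((cmod (f z))\<^sup>2 * disk_weight \<alpha> z))"
    using integrable_disk_weight[OF a] f
    by (intro Bochner_Integration.integrable_add) (simp_all add: bergman_space_def set_integrable_def)
  show "(\<lambda>z. indicator unit_disk z *\<^sub>R (cmod (f z) * disk_weight \<alpha> z)) \<in> borel_measurable lborel"
    by (rule lborel_measurable_indicator_continuous_on)
       (auto intro!: continuous_intros fc continuous_on_disk_weight)
  show "AE z in lborel. norm (indicator unit_disk z *\<^sub>R (cmod (f z) * disk_weight \<alpha> z))
          \<le> norm (indicator unit_disk z *\<^sub>R disk_weight \<alpha> z +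
                  indicator unit_disk z *\<^sub>R ((cmod (f z))\<^sup>2 * disk_weight \<alpha> z))"
  proof (intro AE_I2)
    fix z :: complex
    have "0 \<le> (cmod (f z) - 1) * (cmod (f z) - 1)" by simp
    then have "2 * cmod (f z) \<le> 1 + cmod (f z) * cmod (f z)" by (simp add: algebra_simps)
    then have "cmod (f z) \<le> 1 + (cmod (f z))\<^sup>2"
      using norm_ge_zero[of "f z"] unfolding power2_eq_square by linarith
    then have "cmod (f z) * disk_weight \<alpha> z \<le> (1 + (cmod (f z))\<^sup>2) * disk_weight \<alpha> z"
      by (intro mult_right_mono) auto
    then show "norm (indicator unit_disk z *\<^sub>R (cmod (f z) * disk_weight \<alpha> z))
          \<le> norm (indicator unit_disk z *\<^sub>R disk_weight \<alpha> z +
                  indicator unit_disk z *\<^sub>R ((cmod (f z))\<^sup>2 * disk_weight \<alpha> z))"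
      by (cases "z \<in> unit_disk") (auto simp: algebra_simps)
  qed
qed

lemma bounded_holomorphic_in_bergman_space:
  assumes a: "\<alpha> > -1" and hol: "h holomorphic_on unit_disk"
    and M: "\<And>z. z \<in> unit_disk \<Longrightarrow> cmod (h z) \<le> M"
  shows "h \<in> bergman_space \<alpha>"
proof -
  have hc: "continuous_on unit_disk h" using hol by (rule holomorphic_on_imp_continuous_on)
  have "integrable lborel (\<lambda>z. indicator unit_disk z *\<^sub>R ((cmod (h z))\<^sup>2 * disk_weight \<alpha> z))"
  proof (rule Bochner_Integration.integrable_bound[OF integrable_mult_right[OF integrable_disk_weight[OF a], of "M^2"]])
    show "(\<lambda>z. indicator unit_disk z *\<^sub>R ((cmod (h z))\<^sup>2 * disk_weight \<alpha> z)) \<in> borel_measurable lborel"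
      by (rule lborel_measurable_indicator_continuous_on)
         (auto intro!: continuous_intros hc continuous_on_disk_weight)
    show "AE z in lborel. norm (indicator unit_disk z *\<^sub>R ((cmod (h z))\<^sup>2 * disk_weight \<alpha> z))
          \<le> norm (M^2 * (indicator unit_disk z *\<^sub>R disk_weight \<alpha> z))"
    proof (intro AE_I2)
      fix z :: complex
      show "norm (indicator unit_disk z *\<^sub>R ((cmod (h z))\<^sup>2 * disk_weight \<alpha> z))
              \<le> norm (M^2 * (indicator unit_disk z *\<^sub>R disk_weight \<alpha> z))"
      proof (cases "z \<in> unit_disk")
        case True
        have "(cmod (h z))\<^sup>2 \<le> M^2" using M[OF True] by (intro power_mono) auto
        then have "(cmod (h z))\<^sup>2 * disk_weight \<alpha> z \<le> M^2 * disk_weight \<alpha> z"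
          by (intro mult_right_mono) auto
        then show ?thesis using True by simp
      qed simp
    qed
  qed
  then show ?thesis unfolding bergman_space_def set_integrable_def using hol by simp
qed

lemma K1_holomorphic_on:
  assumes v: "cmod v < 1"
  shows "K1 \<alpha> v holomorphic_on unit_disk"
proof -
  have re: "Re (1 - cnj v * z) > 0" if "z \<in> unit_disk" for z
    using that v by (intro Re_one_minus_pos norm_cnj_mult_less_1) auto
  have "(\<lambda>z. complex_of_real (\<alpha> + 2) * z / (1 - cnj v * z) powr complex_of_real (\<alpha> + 3)) holomorphic_on unit_disk"
  proof (intro holomorphic_intros)
    fix z assume z: "z \<in> unit_disk"
    show "1 - cnj v * z \<notin> \<real>\<^sub>\<le>\<^sub>0" using re[OF z] by (auto simp: complex_nonpos_Reals_iff)
    have "1 - cnj v * z \<noteq> 0"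
    proof
      assume "1 - cnj v * z = 0"
      then have "Re (1 - cnj v * z) = 0" by simp
      with re[OF z] show False by simp
    qed
    then show "(1 - cnj v * z) powr complex_of_real (\<alpha> + 3) \<noteq> 0" by (simp add: powr_def)
  qed
  then show ?thesis by (simp add: K1_def[abs_def])
qed

lemma norm_K1_le:
  assumes a: "\<alpha> > -1" and v: "cmod v \<le> s" and s: "s < 1" and u: "cmod u \<le> 1"
  shows "cmod (K1 \<alpha> v u) \<le> (\<alpha> + 2) / (1 - s) powr (\<alpha> + 3)"
proof -
  have "cmod (cnj v * u) \<le> s" using v u
    by (simp add: norm_mult) (metis mult_mono norm_ge_zero mult.right_neutral order_trans)
  then have lo: "1 - s \<le> cmod (1 - cnj v * u)"
    using norm_triangle_ineq2[of 1 "cnj v * u"] by simp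
  have s1: "1 - s > 0" using s by simp
  have n: "cmod ((1 - cnj v * u) powr complex_of_real (\<alpha> + 3)) = cmod (1 - cnj v * u) powr (\<alpha> + 3)"
    by (subst norm_powr_real_powr') auto
  have "(1 - s) powr (\<alpha> + 3) \<le> cmod (1 - cnj v * u) powr (\<alpha> + 3)"
    using lo s1 a by (intro powr_mono2) auto
  moreover have pos: "(1 - s) powr (\<alpha> + 3) > 0" using s1 by simp
  moreover have c2: "cmod (complex_of_real (\<alpha> + 2)) = \<alpha> + 2" using a by simp
  ultimately have "cmod (K1 \<alpha> v u) \<le> (\<alpha> + 2) * cmod u / (1 - s) powr (\<alpha> + 3)"
    unfolding K1_def norm_divide norm_mult n c2 using a
    by (intro divide_left_mono mult_nonneg_nonneg mult_pos_pos) auto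
  also have "\<dots> \<le> (\<alpha> + 2) * 1 / (1 - s) powr (\<alpha> + 3)"
    using u a pos by (intro divide_right_mono mult_left_mono) auto
  finally show ?thesis by simp
qed

lemma Tmul_K1_Dop_in_bergman_space:
  assumes a: "\<alpha> > -1" and f: "f \<in> bergman_space \<alpha>" and v: "cmod v < 1"
    and \<psi>: "\<psi> holomorphic_on unit_disk" and \<psi>_le: "\<And>z. z \<in> unit_disk \<Longrightarrow> cmod (\<psi> z) \<le> t" and t: "t < 1"
  shows "Tmul (K1 \<alpha> v) (Dop \<psi> f) \<in> bergman_space \<alpha>"
proof -
  have df: "deriv f holomorphic_on unit_disk"
    by (rule holomorphic_deriv[OF bergman_space_holomorphic[OF f]]) simp
  have "compact (deriv f ` cball 0 t)"
    using t by (intro compact_continuous_image holomorphic_on_imp_continuous_on holomorphic_on_subset[OF df]) auto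
  from compact_imp_bounded[OF this] obtain D where "\<forall>y \<in> deriv f ` cball 0 t. norm y \<le> D"
    by (auto simp: bounded_iff)
  then have D: "cmod (deriv f w) \<le> D" if "cmod w \<le> t" for w
    using that by auto
  have "\<psi> ` unit_disk \<subseteq> unit_disk" using \<psi>_le t by fastforce
  from holomorphic_on_compose_gen[OF \<psi> df this]
  have "(\<lambda>z. deriv f (\<psi> z)) holomorphic_on unit_disk" by (simp add: o_def)
  then have "(\<lambda>z. K1 \<alpha> v z * deriv f (\<psi> z)) holomorphic_on unit_disk"
    by (intro holomorphic_on_mult K1_holomorphic_on v)
  moreover have "cmod (K1 \<alpha> v z * deriv f (\<psi> z)) \<le> (\<alpha> + 2) / (1 - cmod v) powr (\<alpha> + 3) * D"
    if "z \<in> unit_disk" for z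
    unfolding norm_mult using norm_K1_le[OF a order.refl v, of z] D[OF \<psi>_le[OF that]] that a v
    by (intro mult_mono) auto
  ultimately show ?thesis
    unfolding Tmul_def Dop_def by (rule bounded_holomorphic_in_bergman_space[OF a])
qed


section \<open>Both sides of the adjoint identity as one series\<close>

lemma bergman_integral_mult_Dop_sums:
  fixes f g h \<phi> :: "complex \<Rightarrow> complex"
  assumes a: "\<alpha> > -1" and f: "f \<in> bergman_space \<alpha>" and g: "g \<in> bergman_space \<alpha>"
    and h: "continuous_on unit_disk h" "\<And>z. z \<in> unit_disk \<Longrightarrow> cmod (h z) \<le> M"
    and \<phi>: "continuous_on unit_disk \<phi>" "\<And>z. z \<in> unit_disk \<Longrightarrow> cmod (\<phi> z) \<le> t" and t: "t < 1"
  shows "(\<lambda>m. complex_of_real ((\<alpha> + 1) / pi * K1_coeff \<alpha> m) * bergman_integral \<alpha> (\<lambda>u. f u * cnj u ^ Suc m)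
              * bergman_integral \<alpha> (\<lambda>z. h z * \<phi> z ^ m * cnj (g z)))
           sums bergman_integral \<alpha> (\<lambda>z. h z * deriv f (\<phi> z) * cnj (g z))"
proof -
  define c where "c = (\<lambda>m. complex_of_real ((\<alpha> + 1) / pi * K1_coeff \<alpha> m) * bergman_integral \<alpha> (\<lambda>u. f u * cnj u ^ Suc m))"
  define N where "N = integral\<^sup>L lborel (\<lambda>z. indicator unit_disk z *\<^sub>R (cmod (f z) * disk_weight \<alpha> z))"
  have hf: "f holomorphic_on unit_disk" using f by (rule bergman_space_holomorphic)
  have fc: "continuous_on unit_disk f" using hf by (rule holomorphic_on_imp_continuous_on)
  have gc: "continuous_on unit_disk g"
    using bergman_space_holomorphic[OF g] by (rule holomorphic_on_imp_continuous_on)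
  have t0: "0 \<le> t" using \<phi>(2)[of 0] by (auto intro: order_trans[OF norm_ge_zero])
  have M0: "0 \<le> M" using h(2)[of 0] by (auto intro: order_trans[OF norm_ge_zero])
  have moment_le: "norm (bergman_integral \<alpha> (\<lambda>u. f u * cnj u ^ Suc m)) \<le> N" for m
    unfolding N_def
  proof (rule norm_bergman_integral_le[OF _ bergman_space_integrable_norm[OF a f]])
    show "continuous_on unit_disk (\<lambda>u. f u * cnj u ^ Suc m)" by (intro continuous_intros fc)
    fix u :: complex assume "u \<in> unit_disk"
    then have "cmod u ^ Suc m \<le> 1" by (intro power_le_one) auto
    then have "cmod (f u) * cmod u ^ Suc m \<le> cmod (f u) * 1" by (intro mult_left_mono) auto
    then show "norm (f u * cnj u ^ Suc m) \<le> cmod (f u)" by (simp add: norm_mult norm_power)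
  qed
  have N0: "N \<ge> 0" using moment_le[of 0] by (auto intro: order_trans[OF norm_ge_zero])
  have c_le: "norm (c m) \<le> K1_coeff \<alpha> m * ((\<alpha> + 1) / pi * N)" for m
  proof -
    have nonneg: "(\<alpha> + 1) / pi * K1_coeff \<alpha> m \<ge> 0" using K1_coeff_nonneg[OF a, of m] a by simp
    then have "norm (c m) = (\<alpha> + 1) / pi * K1_coeff \<alpha> m * norm (bergman_integral \<alpha> (\<lambda>u. f u * cnj u ^ Suc m))"
      unfolding c_def norm_mult norm_of_real abs_of_nonneg[OF nonneg] by simp
    also have "\<dots> \<le> (\<alpha> + 1) / pi * K1_coeff \<alpha> m * N"
      by (intro mult_left_mono moment_le nonneg)
    finally show ?thesis by (simp add: mult_ac)
  qed
  have "(\<lambda>m. bergman_integral \<alpha> (\<lambda>z. c m * (h z * \<phi> z ^ m * cnj (g z))))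
          sums bergman_integral \<alpha> (\<lambda>z. h z * deriv f (\<phi> z) * cnj (g z))"
  proof (rule bergman_integral_sums[OF _ _ integrable_disk_weight_scale(1)[OF bergman_space_integrable_norm[OF a g]]
                                     _ summable_K1_coeff[OF t0 t]])
    show "continuous_on unit_disk (\<lambda>z. c m * (h z * \<phi> z ^ m * cnj (g z)))" for m
      by (intro continuous_intros h \<phi> gc)
    show "K1_coeff \<alpha> m * t ^ m \<ge> 0" for m using K1_coeff_nonneg[OF a] t0 by simp
    show "(\<alpha> + 1) / pi * N * M * cmod (g z) \<ge> 0" for z using a N0 M0 by simp
    fix m z assume z: "z \<in> unit_disk"
    have "norm (c m) * (cmod (h z) * cmod (\<phi> z) ^ m * cmod (g z))
            \<le> K1_coeff \<alpha> m * ((\<alpha> + 1) / pi * N) * (M * t ^ m * cmod (g z))"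
      using c_le[of m] h(2)[OF z] \<phi>(2)[OF z] M0 t0 N0 a K1_coeff_nonneg[OF a, of m]
      by (intro mult_mono power_mono mult_right_mono) auto
    then show "norm (c m * (h z * \<phi> z ^ m * cnj (g z))) \<le> K1_coeff \<alpha> m * t ^ m * ((\<alpha> + 1) / pi * N * M * cmod (g z))"
      by (simp add: norm_mult norm_power mult_ac)
  next
    fix z assume z: "z \<in> unit_disk"
    have "\<phi> z \<in> unit_disk" using \<phi>(2)[OF z] t by simp
    from sums_mult2[OF deriv_sums_bergman_moments[OF a hf bergman_space_integrable_norm[OF a f] this],
                    of "h z * cnj (g z)"]
    show "(\<lambda>m. c m * (h z * \<phi> z ^ m * cnj (g z))) sums (h z * deriv f (\<phi> z) * cnj (g z))"
      by (simp add: c_def mult_ac)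
  qed
  then show ?thesis unfolding bergman_integral_cmult c_def .
qed


text \<open>The kernel identity turns \<open>K1 v u\<close> times the reproducing integral for
  \<open>deriv g (\<sigma> u)\<close> into an integral of \<open>K1 (\<phi> z) u\<close>, which is then expanded in powers of \<open>u\<close>.\<close>
lemma K1_mult_Dop_sums:
  fixes g h \<phi> \<sigma> :: "complex \<Rightarrow> complex"
  assumes a: "\<alpha> > -1" and g: "g \<in> bergman_space \<alpha>"
    and h: "continuous_on unit_disk h" "\<And>z. z \<in> unit_disk \<Longrightarrow> cmod (h z) \<le> M"
    and \<phi>: "continuous_on unit_disk \<phi>" "\<And>z. z \<in> unit_disk \<Longrightarrow> cmod (\<phi> z) \<le> t" and t: "t < 1"
    and \<sigma>: "\<And>u. u \<in> unit_disk \<Longrightarrow> \<sigma> u \<in> unit_disk"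
    and kernel: "\<And>z u. z \<in> unit_disk \<Longrightarrow> u \<in> unit_disk \<Longrightarrow>
                   K1 \<alpha> v u * cnj (K1 \<alpha> (\<sigma> u) z) = cnj (h z) * K1 \<alpha> (\<phi> z) u"
    and u: "u \<in> unit_disk"
  shows "(\<lambda>m. complex_of_real ((\<alpha> + 1) / pi * K1_coeff \<alpha> m)
              * bergman_integral \<alpha> (\<lambda>z. g z * cnj (h z) * cnj (\<phi> z) ^ m) * u ^ Suc m)
           sums (K1 \<alpha> v u * deriv g (\<sigma> u))"
proof -
  have hg: "g holomorphic_on unit_disk" using g by (rule bergman_space_holomorphic)
  have gc: "continuous_on unit_disk g" using hg by (rule holomorphic_on_imp_continuous_on)
  have g1: "integrable lborel (\<lambda>z. indicator unit_disk z *\<^sub>R (cmod (g z) * disk_weight \<alpha> z))"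
    using a g by (rule bergman_space_integrable_norm)
  have t0: "0 \<le> t" using \<phi>(2)[of 0] by (auto intro: order_trans[OF norm_ge_zero])
  have M0: "0 \<le> M" using h(2)[of 0] by (auto intro: order_trans[OF norm_ge_zero])
  have "K1 \<alpha> v u * deriv g (\<sigma> u)
          = complex_of_real ((\<alpha> + 1) / pi) * (K1 \<alpha> v u * bergman_integral \<alpha> (\<lambda>z. g z * cnj (K1 \<alpha> (\<sigma> u) z)))"
    by (simp only: K1_reproduces_deriv[OF a hg g1 \<sigma>[OF u], symmetric] mult.left_commute)
  also have "K1 \<alpha> v u * bergman_integral \<alpha> (\<lambda>z. g z * cnj (K1 \<alpha> (\<sigma> u) z))
               = bergman_integral \<alpha> (\<lambda>z. K1 \<alpha> v u * (g z * cnj (K1 \<alpha> (\<sigma> u) z)))"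
    by (rule bergman_integral_cmult[symmetric])
  also have "bergman_integral \<alpha> (\<lambda>z. K1 \<alpha> v u * (g z * cnj (K1 \<alpha> (\<sigma> u) z)))
               = bergman_integral \<alpha> (\<lambda>z. g z * cnj (h z) * K1 \<alpha> (\<phi> z) u)"
    by (intro bergman_integral_cong) (simp add: kernel[OF _ u] mult_ac)
  finally have reproduce: "K1 \<alpha> v u * deriv g (\<sigma> u)
      = complex_of_real ((\<alpha> + 1) / pi) * bergman_integral \<alpha> (\<lambda>z. g z * cnj (h z) * K1 \<alpha> (\<phi> z) u)" .
  have "(\<lambda>m. bergman_integral \<alpha> (\<lambda>z. (complex_of_real (K1_coeff \<alpha> m) * u ^ Suc m) * (g z * cnj (h z) * cnj (\<phi> z) ^ m)))
          sums bergman_integral \<alpha> (\<lambda>z. g z * cnj (h z) * K1 \<alpha> (\<phi> z) u)"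
  proof (rule bergman_integral_sums[OF _ _ integrable_disk_weight_scale(1)[OF g1, of M] _ summable_K1_coeff[OF t0 t]])
    show "continuous_on unit_disk (\<lambda>z. (complex_of_real (K1_coeff \<alpha> m) * u ^ Suc m) * (g z * cnj (h z) * cnj (\<phi> z) ^ m))" for m
      by (intro continuous_intros gc h \<phi>)
    show "K1_coeff \<alpha> m * t ^ m \<ge> 0" for m using K1_coeff_nonneg[OF a] t0 by simp
    show "M * cmod (g z) \<ge> 0" for z using M0 by simp
    fix m z assume z: "z \<in> unit_disk"
    have "cmod u ^ Suc m \<le> 1" using u by (intro power_le_one) auto
    then have "K1_coeff \<alpha> m * cmod u ^ Suc m * (cmod (g z) * cmod (h z) * cmod (\<phi> z) ^ m)
                 \<le> K1_coeff \<alpha> m * 1 * (cmod (g z) * M * t ^ m)"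
      using h(2)[OF z] \<phi>(2)[OF z] M0 t0 K1_coeff_nonneg[OF a, of m]
      by (intro mult_mono power_mono mult_left_mono mult_nonneg_nonneg) auto
    then show "norm ((complex_of_real (K1_coeff \<alpha> m) * u ^ Suc m) * (g z * cnj (h z) * cnj (\<phi> z) ^ m))
                 \<le> K1_coeff \<alpha> m * t ^ m * (M * cmod (g z))"
      using K1_coeff_nonneg[OF a, of m] by (simp add: norm_mult norm_power mult_ac)
  next
    fix z assume z: "z \<in> unit_disk"
    have "cmod (\<phi> z) < 1" using \<phi>(2)[OF z] t by simp
    then have "cmod (cnj (\<phi> z) * u) < 1" using u by (intro norm_cnj_mult_less_1) auto
    from sums_mult[OF K1_sums[OF this, of \<alpha>], of "g z * cnj (h z)"]
    show "(\<lambda>m. (complex_of_real (K1_coeff \<alpha> m) * u ^ Suc m) * (g z * cnj (h z) * cnj (\<phi> z) ^ m))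
            sums (g z * cnj (h z) * K1 \<alpha> (\<phi> z) u)"
      by (simp add: mult_ac)
  qed
  from sums_mult[OF this[unfolded bergman_integral_cmult], of "complex_of_real ((\<alpha> + 1) / pi)"]
  show ?thesis
    unfolding reproduce by (simp only: of_real_mult mult_ac)
qed

lemma bergman_integral_mult_cnj_Dop_sums:
  fixes f g h \<phi> \<sigma> :: "complex \<Rightarrow> complex"
  assumes a: "\<alpha> > -1" and f: "f \<in> bergman_space \<alpha>" and g: "g \<in> bergman_space \<alpha>"
    and h: "continuous_on unit_disk h" "\<And>z. z \<in> unit_disk \<Longrightarrow> cmod (h z) \<le> M"
    and \<phi>: "continuous_on unit_disk \<phi>" "\<And>z. z \<in> unit_disk \<Longrightarrow> cmod (\<phi> z) \<le> t" and t: "t < 1"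
    and \<sigma>: "\<And>u. u \<in> unit_disk \<Longrightarrow> \<sigma> u \<in> unit_disk"
    and kernel: "\<And>z u. z \<in> unit_disk \<Longrightarrow> u \<in> unit_disk \<Longrightarrow>
                   K1 \<alpha> v u * cnj (K1 \<alpha> (\<sigma> u) z) = cnj (h z) * K1 \<alpha> (\<phi> z) u"
  shows "(\<lambda>m. complex_of_real ((\<alpha> + 1) / pi * K1_coeff \<alpha> m) * bergman_integral \<alpha> (\<lambda>u. f u * cnj u ^ Suc m)
              * bergman_integral \<alpha> (\<lambda>z. h z * \<phi> z ^ m * cnj (g z)))
           sums bergman_integral \<alpha> (\<lambda>u. f u * cnj (K1 \<alpha> v u * deriv g (\<sigma> u)))"
proof -
  define C where "C = (\<lambda>m. bergman_integral \<alpha> (\<lambda>z. g z * cnj (h z) * cnj (\<phi> z) ^ m))"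
  define c where "c = (\<lambda>m. complex_of_real ((\<alpha> + 1) / pi * K1_coeff \<alpha> m) * cnj (C m))"
  define N where "N = integral\<^sup>L lborel (\<lambda>z. indicator unit_disk z *\<^sub>R (cmod (g z) * disk_weight \<alpha> z))"
  have fc: "continuous_on unit_disk f"
    using bergman_space_holomorphic[OF f] by (rule holomorphic_on_imp_continuous_on)
  have gc: "continuous_on unit_disk g"
    using bergman_space_holomorphic[OF g] by (rule holomorphic_on_imp_continuous_on)
  have g1: "integrable lborel (\<lambda>z. indicator unit_disk z *\<^sub>R (cmod (g z) * disk_weight \<alpha> z))"
    using a g by (rule bergman_space_integrable_norm)
  have t0: "0 \<le> t" using \<phi>(2)[of 0] by (auto intro: order_trans[OF norm_ge_zero])
  have M0: "0 \<le> M" using h(2)[of 0] by (auto intro: order_trans[OF norm_ge_zero])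
  have N0: "N \<ge> 0" unfolding N_def
    by (intro Bochner_Integration.integral_nonneg) (auto simp: indicator_def)
  have C_le: "norm (C m) \<le> t ^ m * M * N" for m
  proof -
    have "norm (C m) \<le> integral\<^sup>L lborel (\<lambda>z. indicator unit_disk z *\<^sub>R ((t ^ m * M * cmod (g z)) * disk_weight \<alpha> z))"
      unfolding C_def
    proof (rule norm_bergman_integral_le[OF _ integrable_disk_weight_scale(1)[OF g1]])
      show "continuous_on unit_disk (\<lambda>z. g z * cnj (h z) * cnj (\<phi> z) ^ m)"
        by (intro continuous_intros gc h \<phi>)
      fix z :: complex assume z: "z \<in> unit_disk"
      have "cmod (g z) * cmod (h z) * cmod (\<phi> z) ^ m \<le> cmod (g z) * M * t ^ m"
        using h(2)[OF z] \<phi>(2)[OF z] M0 by (intro mult_mono power_mono mult_left_mono) auto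
      then show "norm (g z * cnj (h z) * cnj (\<phi> z) ^ m) \<le> t ^ m * M * cmod (g z)"
        by (simp add: norm_mult norm_power mult_ac)
    qed
    also have "\<dots> = t ^ m * M * N"
      unfolding N_def integrable_disk_weight_scale(2)[OF g1] ..
    finally show ?thesis .
  qed
  have c_le: "norm (c m) \<le> K1_coeff \<alpha> m * t ^ m * ((\<alpha> + 1) / pi * M * N)" for m
  proof -
    have nonneg: "(\<alpha> + 1) / pi * K1_coeff \<alpha> m \<ge> 0" using K1_coeff_nonneg[OF a, of m] a by simp
    then have "norm (c m) = (\<alpha> + 1) / pi * K1_coeff \<alpha> m * norm (C m)"
      unfolding c_def norm_mult norm_of_real abs_of_nonneg[OF nonneg] complex_mod_cnj by simp
    also have "\<dots> \<le> (\<alpha> + 1) / pi * K1_coeff \<alpha> m * (t ^ m * M * N)"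
      by (intro mult_left_mono C_le nonneg)
    finally show ?thesis by (simp add: mult_ac)
  qed
  have "(\<lambda>m. bergman_integral \<alpha> (\<lambda>u. c m * (f u * cnj u ^ Suc m)))
          sums bergman_integral \<alpha> (\<lambda>u. f u * cnj (K1 \<alpha> v u * deriv g (\<sigma> u)))"
  proof (rule bergman_integral_sums[OF _ _ integrable_disk_weight_scale(1)[OF bergman_space_integrable_norm[OF a f]]
                                     _ summable_K1_coeff[OF t0 t]])
    show "continuous_on unit_disk (\<lambda>u. c m * (f u * cnj u ^ Suc m))" for m
      by (intro continuous_intros fc)
    show "K1_coeff \<alpha> m * t ^ m \<ge> 0" for m using K1_coeff_nonneg[OF a] t0 by simp
    show "(\<alpha> + 1) / pi * M * N * cmod (f u) \<ge> 0" for u using a M0 N0 by simp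
    fix m u assume u: "u \<in> unit_disk"
    have "cmod u ^ Suc m \<le> 1" using u by (intro power_le_one) auto
    then have "norm (c m) * (cmod (f u) * cmod u ^ Suc m)
                 \<le> K1_coeff \<alpha> m * t ^ m * ((\<alpha> + 1) / pi * M * N) * (cmod (f u) * 1)"
      using c_le[of m] a M0 N0 t0 K1_coeff_nonneg[OF a, of m]
      by (intro mult_mono mult_left_mono) auto
    then show "norm (c m * (f u * cnj u ^ Suc m)) \<le> K1_coeff \<alpha> m * t ^ m * ((\<alpha> + 1) / pi * M * N * cmod (f u))"
      by (simp add: norm_mult norm_power mult_ac)
  next
    fix u assume u: "u \<in> unit_disk"
    have "(\<lambda>m. cnj (complex_of_real ((\<alpha> + 1) / pi * K1_coeff \<alpha> m) * C m * u ^ Suc m))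
            sums cnj (K1 \<alpha> v u * deriv g (\<sigma> u))"
      using K1_mult_Dop_sums[OF a g h \<phi> t \<sigma> kernel u] unfolding C_def by (simp only: sums_cnj)
    from sums_mult[OF this, of "f u"]
    show "(\<lambda>m. c m * (f u * cnj u ^ Suc m)) sums (f u * cnj (K1 \<alpha> v u * deriv g (\<sigma> u)))"
      by (simp add: c_def mult_ac)
  qed
  moreover have "cnj (C m) = bergman_integral \<alpha> (\<lambda>z. h z * \<phi> z ^ m * cnj (g z))" for m
    unfolding C_def cnj_bergman_integral by (rule bergman_integral_cong) (simp add: mult_ac)
  ultimately show ?thesis
    unfolding bergman_integral_cmult c_def by (simp add: mult_ac)
qed


theorem theorem6p1:
  fixes \<alpha> :: real and a b c d :: complex
  defines "\<phi> \<equiv> lfm a b c d"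
      and "\<sigma> \<equiv> lfm (cnj a) (- cnj c) (- cnj b) (cnj d)"
  assumes alpha: "\<alpha> > -1"
      and nondeg: "a * d - b * c \<noteq> 0"
      and selfmap: "\<forall>z\<in>unit_disk. c * z + d \<noteq> 0 \<and> \<phi> z \<in> unit_disk"
      and supnorm: "(SUP z\<in>unit_disk. cmod (\<phi> z)) < 1"
  shows "\<forall>f\<in>bergman_space \<alpha>. \<forall>g\<in>bergman_space \<alpha>.
           Tmul (K1 \<alpha> (\<sigma> 0)) (Dop \<phi> f) \<in> bergman_space \<alpha> \<and>
           Tmul (K1 \<alpha> (\<phi> 0)) (Dop \<sigma> g) \<in> bergman_space \<alpha> \<and>
           bergman_inner \<alpha> (Tmul (K1 \<alpha> (\<sigma> 0)) (Dop \<phi> f)) g =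
           bergman_inner \<alpha> f (Tmul (K1 \<alpha> (\<phi> 0)) (Dop \<sigma> g))"
proof (intro ballI conjI)
  fix f g assume f: "f \<in> bergman_space \<alpha>" and g: "g \<in> bergman_space \<alpha>"
  have maps: "lfm_maps_closed_disk_into_disk a b c d"
    using nondeg selfmap supnorm unfolding \<phi>_def by (rule lfm_maps_closed_disk_into_disk_if_SUP_less_1)
  have maps\<sigma>: "lfm_maps_closed_disk_into_disk (cnj a) (- cnj c) (- cnj b) (cnj d)"
    using nondeg maps by (rule Krein_adjoint_maps_closed_disk_into_disk)
  have \<phi>_hol: "\<phi> holomorphic_on unit_disk" and \<sigma>_hol: "\<sigma> holomorphic_on unit_disk"
    using lfm_maps_closed_disk_into_disk_holomorphic[OF maps] lfm_maps_closed_disk_into_disk_holomorphic[OF maps\<sigma>]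
    unfolding \<phi>_def \<sigma>_def by (auto elim!: holomorphic_on_subset)
  have \<phi>0: "cmod (\<phi> 0) < 1" and \<sigma>0: "cmod (\<sigma> 0) < 1"
    using maps maps\<sigma> by (simp_all add: lfm_maps_closed_disk_into_disk_def \<phi>_def \<sigma>_def)
  obtain t where t: "t < 1" and \<phi>_le: "\<And>z. z \<in> unit_disk \<Longrightarrow> cmod (\<phi> z) \<le> t"
    and \<sigma>_le: "\<And>z. z \<in> unit_disk \<Longrightarrow> cmod (\<sigma> z) \<le> t"
    using lfm_Krein_pair_uniform_bound[OF nondeg maps] unfolding \<phi>_def \<sigma>_def by blast
  show "Tmul (K1 \<alpha> (\<sigma> 0)) (Dop \<phi> f) \<in> bergman_space \<alpha>"
    by (rule Tmul_K1_Dop_in_bergman_space[OF alpha f \<sigma>0 \<phi>_hol \<phi>_le t])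
  show "Tmul (K1 \<alpha> (\<phi> 0)) (Dop \<sigma> g) \<in> bergman_space \<alpha>"
    by (rule Tmul_K1_Dop_in_bergman_space[OF alpha g \<phi>0 \<sigma>_hol \<sigma>_le t])
  have h: "continuous_on unit_disk (K1 \<alpha> (\<sigma> 0))"
    "\<And>z. z \<in> unit_disk \<Longrightarrow> cmod (K1 \<alpha> (\<sigma> 0) z) \<le> (\<alpha> + 2) / (1 - cmod (\<sigma> 0)) powr (\<alpha> + 3)"
    using \<sigma>0 by (auto intro!: holomorphic_on_imp_continuous_on K1_holomorphic_on norm_K1_le alpha)
  have \<phi>_cont: "continuous_on unit_disk \<phi>" using \<phi>_hol by (rule holomorphic_on_imp_continuous_on)
  have \<sigma>_in: "\<And>u. u \<in> unit_disk \<Longrightarrow> \<sigma> u \<in> unit_disk" using \<sigma>_le t by fastforce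
  from bergman_integral_mult_Dop_sums[OF alpha f g h \<phi>_cont \<phi>_le t]
       bergman_integral_mult_cnj_Dop_sums[OF alpha f g h \<phi>_cont \<phi>_le t \<sigma>_in
         K1_lfm_Krein_identity[OF nondeg maps, folded \<phi>_def \<sigma>_def]]
  show "bergman_inner \<alpha> (Tmul (K1 \<alpha> (\<sigma> 0)) (Dop \<phi> f)) g =
        bergman_inner \<alpha> f (Tmul (K1 \<alpha> (\<phi> 0)) (Dop \<sigma> g))"
    unfolding bergman_inner_eq_bergman_integral Tmul_def Dop_def by (simp add: sums_unique2)
qed

end
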